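(* Let $d\in\mathbb{N}$ and let $w(k)>0$, $k\in\mathbb{Z}^d$, be weights with $\sum_{k\in\mathbb{Z}^d}w(k)^{-2}<\infty$. Then for all $n\in\mathbb{N}$ $$a_n\big(I_d:\mathcal{M}(\mathbb{T}^d)\to F_d(1/w)\big)=a_n\big(I_d:\mathcal{B}(\mathbb{T}^d)\to F_d(1/w)\big)=a_n\big(I_d:F_d(w)\to\mathcal{A}(\mathbb{T}^d)\big).$$
   Context: $\mathbb{T}^d=[0,2\pi)^d$ with the normalized Lebesgue measure $(2\pi)^{-d}dx$; $\hat f(k)=(2\pi)^{-d}\int_{\mathbb{T}^d}f(x)e^{-ik\cdot x}dx$ for $f\in L_1$. Periodic distributions $g$ are identified with formal Fourier series $\sum_k\hat g(k)e^{ik\cdot x}$ with polynomially bounded coefficients. For weights $v(k)>0$, $F_d(v)$ is the Hilbert space of periodic distributions $g$ with $\|g|F_d(v)\|=(\sum_k v(k)^2|\hat g(k)|^2)^{1/2}<\infty$; $1/w$ denotes the weight $k\mapsto1/w(k)$. $\mathcal{A}(\mathbb{T}^d)$: $f$ with $\|f|\mathcal{A}\|=\sum_k|\hat f(k)|<\infty$. $\mathcal{B}(\mathbb{T}^d)$: periodic distributions $g$ with $\|g|\mathcal{B}\|=\sup_k|\hat g(k)|<\infty$. $\mathcal{M}(\mathbb{T}^d)$: complex Borel measures $\mu$ on $\mathbb{T}^d$ with norm the total variation $|\mu|(\mathbb{T}^d)$ (the dual of $C(\mathbb{T}^d)$ via $f\mapsto\int f\,d\mu$); $\mu$ is identified with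 the periodic distribution with coefficients $\hat\mu(k)=\int_{\mathbb{T}^d}e^{-ik\cdot x}d\mu(x)$ (so an integrable $f$ corresponds to the measure $f(x)(2\pi)^{-d}dx$). $I_d$ denotes the inclusion maps; $a_n(T)=\inf\{\|T-A\|:\operatorname{rank}A<n\}$. *)

theory Defs
  imports "HOL-Analysis.Analysis"
begin

text \<open>Dimension d is the cardinality of the finite index type 'd.
  Periodic distributions are identified with their Fourier coefficient
  sequences (int^'d \<Rightarrow> complex).\<close>

type_synonym 'd coeffs = "int^'d \<Rightarrow> complex"

definition kdot :: "int^'d::finite \<Rightarrow> real^'d \<Rightarrow> real" where
  "kdot k x = (\<Sum>i\<in>UNIV. real_of_int (k $ i) * x $ i)"

definition torus :: "(real^'d::finite) set" where
  "torus = {x. \<forall>i. 0 \<le> x $ i \<and> x $ i < 2 * pi}"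

text \<open>Polynomially bounded coefficients (= periodic distributions).\<close>
definition poly_bounded :: "'d::finite coeffs \<Rightarrow> bool" where
  "poly_bounded c \<longleftrightarrow> (\<exists>C N. \<forall>k. cmod (c k) \<le> C * (1 + (\<Sum>i\<in>UNIV. real_of_int \<bar>k $ i\<bar>)) ^ N)"

definition F_set :: "(int^'d::finite \<Rightarrow> real) \<Rightarrow> 'd coeffs set" where
  "F_set v = {c. poly_bounded c \<and> (\<lambda>k. (v k)\<^sup>2 * (cmod (c k))\<^sup>2) summable_on UNIV}"

definition F_norm :: "(int^'d::finite \<Rightarrow> real) \<Rightarrow> 'd coeffs \<Rightarrow> real" where
  "F_norm v c = sqrt (\<Sum>\<^sub>\<infinity>k. (v k)\<^sup>2 * (cmod (c k))\<^sup>2)"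

definition A_set :: "'d::finite coeffs set" where
  "A_set = {c. (\<lambda>k. cmod (c k)) summable_on UNIV}"

definition A_norm :: "'d::finite coeffs \<Rightarrow> real" where
  "A_norm c = (\<Sum>\<^sub>\<infinity>k. cmod (c k))"

definition B_set :: "'d::finite coeffs set" where
  "B_set = {c. bounded (range (\<lambda>k. cmod (c k)))}"

definition B_norm :: "'d::finite coeffs \<Rightarrow> real" where
  "B_norm c = (SUP k. cmod (c k))"

text \<open>Complex Borel measures on T^d, represented as mu = h * nu with nu a
  finite Borel measure concentrated on the torus and h \<in> L1(nu).
  Every complex Borel measure arises this way (take nu = |mu|), and the total
  variation of h * nu is the integral of |h| w.r.t. nu.\<close>
definition cmeas_rep :: "(real^'d::finite) measure \<Rightarrow> (real^'d \<Rightarrow> complex) \<Rightarrow> bool" where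
  "cmeas_rep \<nu> h \<longleftrightarrow> sets \<nu> = sets borel \<and> finite_measure \<nu> \<and>
      emeasure \<nu> (UNIV - torus) = 0 \<and> integrable \<nu> h"

definition meas_coeff :: "(real^'d::finite) measure \<Rightarrow> (real^'d \<Rightarrow> complex) \<Rightarrow> 'd coeffs" where
  "meas_coeff \<nu> h = (\<lambda>k. integral\<^sup>L \<nu> (\<lambda>x. exp (- \<i> * complex_of_real (kdot k x)) * h x))"

definition M_set :: "'d::finite coeffs set" where
  "M_set = {c. \<exists>\<nu> h. cmeas_rep \<nu> h \<and> c = meas_coeff \<nu> h}"

text \<open>Total variation norm (all representations of the same measure give the
  same value, so the infimum is the total variation).\<close>
definition M_norm :: "'d::finite coeffs \<Rightarrow> real" where
  "M_norm c = (INF (\<nu>, h) \<in> {(\<nu>, h). cmeas_rep \<nu> h \<and> c = meas_coeff \<nu> h}.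
                  integral\<^sup>L \<nu> (\<lambda>x. cmod (h x)))"

definition op_norm :: "'d coeffs set \<Rightarrow> ('d coeffs \<Rightarrow> real) \<Rightarrow> ('d coeffs \<Rightarrow> real)
    \<Rightarrow> ('d coeffs \<Rightarrow> 'd coeffs) \<Rightarrow> real" where
  "op_norm X nX nY T = (SUP x \<in> {x \<in> X. nX x \<le> 1}. nY (T x))"

definition bounded_lin_op :: "'d coeffs set \<Rightarrow> ('d coeffs \<Rightarrow> real) \<Rightarrow> 'd coeffs set
    \<Rightarrow> ('d coeffs \<Rightarrow> real) \<Rightarrow> ('d coeffs \<Rightarrow> 'd coeffs) \<Rightarrow> bool" where
  "bounded_lin_op X nX Y nY A \<longleftrightarrow>
     (\<forall>x\<in>X. A x \<in> Y) \<and>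
     (\<forall>x\<in>X. \<forall>y\<in>X. A (\<lambda>k. x k + y k) = (\<lambda>k. A x k + A y k)) \<and>
     (\<forall>x\<in>X. \<forall>a::complex. A (\<lambda>k. a * x k) = (\<lambda>k. a * A x k)) \<and>
     (\<exists>C. \<forall>x\<in>X. nY (A x) \<le> C * nX x)"

definition rank_less :: "'d coeffs set \<Rightarrow> ('d coeffs \<Rightarrow> 'd coeffs) \<Rightarrow> nat \<Rightarrow> bool" where
  "rank_less X A n \<longleftrightarrow> (\<exists>m<n. \<exists>ys :: nat \<Rightarrow> 'd coeffs.
       \<forall>x\<in>X. \<exists>a :: nat \<Rightarrow> complex. A x = (\<lambda>k. \<Sum>j<m. a j * ys j k))"

definition approx_num :: "'d coeffs set \<Rightarrow> ('d coeffs \<Rightarrow> real) \<Rightarrow> 'd coeffs set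
    \<Rightarrow> ('d coeffs \<Rightarrow> real) \<Rightarrow> ('d coeffs \<Rightarrow> 'd coeffs) \<Rightarrow> nat \<Rightarrow> real" where
  "approx_num X nX Y nY T n =
     (INF A \<in> {A. bounded_lin_op X nX Y nY A \<and> rank_less X A n}.
        op_norm X nX nY (\<lambda>x k. T x k - A x k))"

end

theory Submission
  imports Defs "HOL-Probability.Giry_Monad"
begin

text \<open>All three approximation numbers equal \<open>(\<Sum>\<^sub>k\<^sub>\<notin>\<^sub>J w(k)\<^sup>-\<^sup>2)\<^sup>1\<^sup>/\<^sup>2\<close>, where \<open>J\<close> collects
  \<open>n - 1\<close> frequencies of smallest weight. The upper bound is attained by the coordinate
  projection onto \<open>J\<close>. For the lower bound, let \<open>A\<close> have rank \<open>< n\<close> and let \<open>Q \<supseteq> J\<close> be finite.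
  There are \<open>M\<close> grid points \<open>t\<^sub>l\<close> on which the characters \<open>e\<^sup>i\<^sup>k\<^sup>t\<close>, \<open>k \<in> Q\<close>, are orthogonal.
  Averaging over \<open>l\<close> and a Bessel/trace inequality for the range of \<open>A\<close> show that some
  Dirac measure \<open>\<delta>(t\<^sub>l)\<close>, which lies in the unit balls of \<open>\<M>\<close> and \<open>\<B>\<close>, is at distance at
  least \<open>(\<Sum>\<^sub>k\<^sub>\<in>\<^sub>Q\<^sub>-\<^sub>J w(k)\<^sup>-\<^sup>2)\<^sup>1\<^sup>/\<^sup>2\<close> from its image under \<open>A\<close>; then let \<open>Q\<close> grow. For
  \<open>F\<^sub>d(w) \<rightarrow> \<A>\<close> the same averaging is applied to the rows of \<open>A\<close>, and the far character
  is paired against a unit vector of \<open>F\<^sub>d(w)\<close>.\<close>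

section \<open>Finite-dimensional inner products\<close>

definition inner_on :: "'k set \<Rightarrow> ('k \<Rightarrow> complex) \<Rightarrow> ('k \<Rightarrow> complex) \<Rightarrow> complex" where
  "inner_on Q f g = (\<Sum>k\<in>Q. f k * cnj (g k))"

definition sqnorm_on :: "'k set \<Rightarrow> ('k \<Rightarrow> complex) \<Rightarrow> real" where
  "sqnorm_on Q f = (\<Sum>k\<in>Q. (cmod (f k))\<^sup>2)"

definition orthonormal_on :: "'k set \<Rightarrow> (nat \<Rightarrow> 'k \<Rightarrow> complex) \<Rightarrow> nat \<Rightarrow> bool" where
  "orthonormal_on Q b r \<longleftrightarrow> (\<forall>i<r. \<forall>j<r. inner_on Q (b i) (b j) = (if i = j then 1 else 0))"

definition in_span_on :: "'k set \<Rightarrow> (nat \<Rightarrow> 'k \<Rightarrow> complex) \<Rightarrow> nat \<Rightarrow> ('k \<Rightarrow> complex) \<Rightarrow> bool" where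
  "in_span_on Q b r y \<longleftrightarrow> (\<exists>c. \<forall>k\<in>Q. y k = (\<Sum>i<r. c i * b i k))"

lemma inner_on_self: "inner_on Q f f = of_real (sqnorm_on Q f)"
  unfolding inner_on_def sqnorm_on_def by (simp only: of_real_sum complex_norm_square)

lemma inner_on_commute: "inner_on Q g f = cnj (inner_on Q f g)"
  unfolding inner_on_def by (simp add: mult.commute)

lemma inner_on_sum_left: "inner_on Q (\<lambda>k. \<Sum>i<r. d i * b i k) g = (\<Sum>i<r. d i * inner_on Q (b i) g)"
  unfolding inner_on_def by (simp add: sum_distrib_left sum_distrib_right sum.swap[of _ Q] mult.assoc)

lemma inner_on_sum_right:
  "inner_on Q g (\<lambda>k. \<Sum>i<r. d i * b i k) = (\<Sum>i<r. cnj (d i) * inner_on Q g (b i))"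
  by (subst inner_on_commute, subst inner_on_sum_left) (simp add: inner_on_commute[of Q g])

lemma inner_on_diff_left: "inner_on Q (\<lambda>k. f k - g k) h = inner_on Q f h - inner_on Q g h"
  unfolding inner_on_def by (simp add: algebra_simps sum_subtractf)

lemma inner_on_diff_right: "inner_on Q h (\<lambda>k. f k - g k) = inner_on Q h f - inner_on Q h g"
  unfolding inner_on_def by (simp add: algebra_simps sum_subtractf)

lemma inner_on_divide_left: "inner_on Q (\<lambda>k. f k / c) g = inner_on Q f g / c"
  unfolding inner_on_def by (simp add: sum_divide_distrib)

lemma inner_on_divide_right:
  "inner_on Q f (\<lambda>k. g k / complex_of_real c) = inner_on Q f g / complex_of_real c"
  unfolding inner_on_def by (simp add: sum_divide_distrib)

lemma sqnorm_on_nonneg: "sqnorm_on Q f \<ge> 0"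
  unfolding sqnorm_on_def by (simp add: sum_nonneg)

lemma sqnorm_on_cong: "(\<And>k. k \<in> Q \<Longrightarrow> f k = g k) \<Longrightarrow> sqnorm_on Q f = sqnorm_on Q g"
  unfolding sqnorm_on_def by (rule sum.cong) auto

lemma sqnorm_on_eq_0_iff: "finite Q \<Longrightarrow> sqnorm_on Q f = 0 \<longleftrightarrow> (\<forall>k\<in>Q. f k = 0)"
  unfolding sqnorm_on_def by (simp add: sum_nonneg_eq_0_iff)

lemma sqnorm_on_lincomb:
  assumes "orthonormal_on Q b r"
  shows "sqnorm_on Q (\<lambda>k. \<Sum>i<r. d i * b i k) = (\<Sum>i<r. (cmod (d i))\<^sup>2)"
proof -
  have "of_real (sqnorm_on Q (\<lambda>k. \<Sum>i<r. d i * b i k))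
      = (\<Sum>i<r. d i * (\<Sum>j<r. cnj (d j) * inner_on Q (b i) (b j)))"
    by (simp add: inner_on_self[symmetric] inner_on_sum_left inner_on_sum_right)
  also have "\<dots> = (\<Sum>i<r. d i * cnj (d i))"
  proof (rule sum.cong[OF refl])
    fix i assume i: "i \<in> {..<r}"
    have "(\<Sum>j<r. cnj (d j) * inner_on Q (b i) (b j)) = (\<Sum>j<r. if j = i then cnj (d j) else 0)"
      using assms i unfolding orthonormal_on_def by (intro sum.cong) auto
    then show "d i * (\<Sum>j<r. cnj (d j) * inner_on Q (b i) (b j)) = d i * cnj (d i)"
      using i by (simp add: sum.delta')
  qed
  also have "\<dots> = of_real (\<Sum>i<r. (cmod (d i))\<^sup>2)"
    by (simp only: of_real_sum complex_norm_square)
  finally show ?thesis by (simp only: of_real_eq_iff)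
qed

lemma sqnorm_on_diff_lincomb:
  assumes "orthonormal_on Q b r"
  shows "sqnorm_on Q (\<lambda>k. u k - (\<Sum>i<r. d i * b i k))
       = sqnorm_on Q u + (\<Sum>i<r. (cmod (d i - inner_on Q u (b i)))\<^sup>2 - (cmod (inner_on Q u (b i)))\<^sup>2)"
proof -
  define v where "v = (\<lambda>k. \<Sum>i<r. d i * b i k)"
  define p where "p = (\<lambda>i. inner_on Q u (b i))"
  have uv: "inner_on Q u v = (\<Sum>i<r. cnj (d i) * p i)"
    unfolding v_def p_def by (simp add: inner_on_sum_right)
  have vv: "sqnorm_on Q v = (\<Sum>i<r. (cmod (d i))\<^sup>2)"
    unfolding v_def using assms by (rule sqnorm_on_lincomb)
  have "of_real (sqnorm_on Q (\<lambda>k. u k - v k))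
      = inner_on Q u u - inner_on Q u v - cnj (inner_on Q u v) + inner_on Q v v"
    by (simp add: inner_on_self[symmetric] inner_on_diff_left inner_on_diff_right
        inner_on_commute[of Q v u])
  then have "sqnorm_on Q (\<lambda>k. u k - v k)
      = sqnorm_on Q u - 2 * Re (inner_on Q u v) + sqnorm_on Q v"
    by (simp add: inner_on_self complex_eq_iff)
  also have "\<dots> = sqnorm_on Q u + (\<Sum>i<r. (cmod (d i))\<^sup>2 - 2 * Re (cnj (d i) * p i))"
    by (simp add: vv uv Re_sum sum_subtractf sum_distrib_left)
  also have "\<dots> = sqnorm_on Q u + (\<Sum>i<r. (cmod (d i - p i))\<^sup>2 - (cmod (p i))\<^sup>2)"
  proof -
    have "\<And>x y :: complex. (cmod x)\<^sup>2 - 2 * Re (cnj x * y) = (cmod (x - y))\<^sup>2 - (cmod y)\<^sup>2"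
      by (simp only: cmod_power2) (simp add: power2_eq_square algebra_simps)
    then show ?thesis by simp
  qed
  finally show ?thesis unfolding v_def p_def .
qed

lemma sqnorm_on_diff_lincomb_ge:
  assumes "orthonormal_on Q b r"
  shows "sqnorm_on Q (\<lambda>k. u k - (\<Sum>i<r. d i * b i k))
       \<ge> sqnorm_on Q u - (\<Sum>i<r. (cmod (inner_on Q u (b i)))\<^sup>2)"
proof -
  have "(\<Sum>i<r. - (cmod (inner_on Q u (b i)))\<^sup>2)
      \<le> (\<Sum>i<r. (cmod (d i - inner_on Q u (b i)))\<^sup>2 - (cmod (inner_on Q u (b i)))\<^sup>2)"
    by (intro sum_mono) simp
  then show ?thesis using sqnorm_on_diff_lincomb[OF assms, of u d] by (simp add: sum_negf)
qed

lemma bessel_inequality: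
  assumes "orthonormal_on Q b r"
  shows "(\<Sum>i<r. (cmod (inner_on Q u (b i)))\<^sup>2) \<le> sqnorm_on Q u"
  using sqnorm_on_diff_lincomb[OF assms, of u "\<lambda>i. inner_on Q u (b i)"]
    sqnorm_on_nonneg[of Q "\<lambda>k. u k - (\<Sum>i<r. inner_on Q u (b i) * b i k)"]
  by (simp add: sum_negf)

lemma in_span_on_mono:
  assumes "in_span_on Q b r y" "r \<le> r'" "\<And>i. i < r \<Longrightarrow> b' i = b i"
  shows "in_span_on Q b' r' y"
proof -
  obtain c where c: "\<forall>k\<in>Q. y k = (\<Sum>i<r. c i * b i k)"
    using assms(1) unfolding in_span_on_def by blast
  define c' where "c' = (\<lambda>i. if i < r then c i else 0)"
  have "(\<Sum>i<r'. c' i * b' i k) = (\<Sum>i<r. c i * b i k)" for k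
  proof -
    have "(\<Sum>i<r'. c' i * b' i k) = (\<Sum>i<r. c' i * b' i k)"
      using assms(2) by (intro sum.mono_neutral_right) (auto simp: c'_def)
    then show ?thesis using assms(3) by (simp add: c'_def)
  qed
  then show ?thesis unfolding in_span_on_def using c by metis
qed

lemma orthonormal_on_extend:
  assumes ob: "orthonormal_on Q b r" and fin: "finite Q" and y: "\<not> in_span_on Q b r y"
  shows "\<exists>b'. orthonormal_on Q b' (Suc r) \<and> (\<forall>i<r. b' i = b i) \<and> in_span_on Q b' (Suc r) y"
proof -
  define p where "p = (\<lambda>i. inner_on Q y (b i))"
  define res where "res = (\<lambda>k. y k - (\<Sum>i<r. p i * b i k))"
  have res_orth: "inner_on Q res (b i) = 0" if "i < r" for i
  proof -
    have "(\<Sum>j<r. p j * inner_on Q (b j) (b i)) = (\<Sum>j<r. if j = i then p j else 0)"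
      using ob that unfolding orthonormal_on_def by (intro sum.cong) auto
    then show ?thesis
      using that by (simp add: res_def p_def inner_on_diff_left inner_on_sum_left sum.delta')
  qed
  have "sqnorm_on Q res \<noteq> 0"
    using y sqnorm_on_eq_0_iff[OF fin, of res] unfolding in_span_on_def res_def by auto
  then have nr: "nr > 0" "nr * nr = sqnorm_on Q res" if "nr = sqrt (sqnorm_on Q res)" for nr
    using that sqnorm_on_nonneg[of Q res] by auto
  define nr where "nr = sqrt (sqnorm_on Q res)"
  note nr = nr[OF nr_def]
  define b' where "b' = b(r := (\<lambda>k. res k / complex_of_real nr))"
  have b'_lt: "b' i = b i" if "i < r" for i using that unfolding b'_def by simp
  have "inner_on Q (b' r) (b' r) = 1"
    using nr by (simp add: b'_def inner_on_divide_left inner_on_divide_right inner_on_self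
        nr(2)[symmetric])
  moreover have "inner_on Q (b' r) (b' i) = 0" "inner_on Q (b' i) (b' r) = 0" if "i < r" for i
    using res_orth[OF that] that
    by (simp_all add: b'_def inner_on_divide_left inner_on_commute[of Q "b i"])
  ultimately have "orthonormal_on Q b' (Suc r)"
    using ob unfolding orthonormal_on_def by (auto simp: less_Suc_eq b'_lt)
  moreover have "in_span_on Q b' (Suc r) y"
    unfolding in_span_on_def
  proof (intro exI[of _ "p(r := complex_of_real nr)"] ballI)
    fix k assume "k \<in> Q"
    show "y k = (\<Sum>i<Suc r. (p(r := complex_of_real nr)) i * b' i k)"
      using nr by (simp add: b'_lt b'_def res_def)
  qed
  ultimately show ?thesis using b'_lt by blast
qed

lemma gram_schmidt_on:
  assumes "finite Q"
  shows "\<exists>r\<le>m. \<exists>b. orthonormal_on Q b r \<and> (\<forall>j<m. in_span_on Q b r (ys j))"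
proof (induction m)
  case 0
  show ?case by (auto simp: orthonormal_on_def)
next
  case (Suc m)
  then obtain r b where r: "r \<le> m" and ob: "orthonormal_on Q b r"
    and sp: "\<forall>j<m. in_span_on Q b r (ys j)" by blast
  show ?case
  proof (cases "in_span_on Q b r (ys m)")
    case True
    then show ?thesis using r ob sp by (metis le_Suc_eq less_Suc_eq)
  next
    case False
    then obtain b' where "orthonormal_on Q b' (Suc r)" "\<forall>i<r. b' i = b i"
      "in_span_on Q b' (Suc r) (ys m)"
      using orthonormal_on_extend[OF ob assms] by blast
    moreover have "\<forall>j<m. in_span_on Q b' (Suc r) (ys j)"
      using sp in_span_on_mono[of Q b r _ "Suc r" b'] \<open>\<forall>i<r. b' i = b i\<close> by auto
    ultimately show ?thesis using r by (metis Suc_le_mono less_Suc_eq)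
  qed
qed

section \<open>The averaging inequality\<close>

lemma weighted_sum_le_top_sum:
  fixes s p :: "'k \<Rightarrow> real"
  assumes fin: "finite Q" and JQ: "J \<subseteq> Q"
    and psum: "(\<Sum>k\<in>Q. p k) \<le> real (card J)"
    and p01: "\<And>k. k \<in> Q \<Longrightarrow> 0 \<le> p k \<and> p k \<le> 1"
    and s0: "\<And>k. k \<in> Q \<Longrightarrow> 0 \<le> s k"
    and top: "\<And>k k'. k \<in> J \<Longrightarrow> k' \<in> Q - J \<Longrightarrow> s k' \<le> s k"
  shows "(\<Sum>k\<in>Q. s k * p k) \<le> (\<Sum>k\<in>J. s k)"
proof (cases "J = {}")
  case True
  then have "\<forall>k\<in>Q. p k = 0"
    using psum p01 sum_nonneg_eq_0_iff[OF fin, of p] by (simp add: antisym sum_nonneg)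
  then show ?thesis using True by simp
next
  case False
  have finJ: "finite J" using fin JQ finite_subset by blast
  define \<mu> where "\<mu> = Min (s ` J)"
  have \<mu>_le: "\<mu> \<le> s k" if "k \<in> J" for k unfolding \<mu>_def using finJ that by simp
  have \<mu>_ge: "s k' \<le> \<mu>" if "k' \<in> Q - J" for k'
    unfolding \<mu>_def using finJ False top[OF _ that] by simp
  have "\<mu> \<in> s ` J" unfolding \<mu>_def using finJ False by simp
  then have \<mu>0: "0 \<le> \<mu>" using JQ s0 by auto
  have split: "(\<Sum>k\<in>Q. f k) = (\<Sum>k\<in>J. f k) + (\<Sum>k\<in>Q - J. f k)" for f :: "'k \<Rightarrow> real"
    using fin JQ by (metis add.commute sum.subset_diff)
  have "(\<Sum>k\<in>Q - J. s k * p k) \<le> (\<Sum>k\<in>Q - J. \<mu> * p k)"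
    using p01 \<mu>_ge by (intro sum_mono mult_right_mono) auto
  also have "\<dots> = \<mu> * (\<Sum>k\<in>Q - J. p k)" by (simp add: sum_distrib_left)
  also have "\<dots> \<le> \<mu> * (real (card J) - (\<Sum>k\<in>J. p k))"
    using psum split[of p] \<mu>0 by (intro mult_left_mono) auto
  also have "\<dots> = (\<Sum>k\<in>J. \<mu> * (1 - p k))"
    by (simp add: sum_distrib_left[symmetric] sum_subtractf algebra_simps)
  also have "\<dots> \<le> (\<Sum>k\<in>J. s k * (1 - p k))"
    using p01 JQ \<mu>_le by (intro sum_mono mult_right_mono) auto
  finally have "(\<Sum>k\<in>Q. s k * p k) \<le> (\<Sum>k\<in>J. s k * p k + s k * (1 - p k))"
    using split[of "\<lambda>k. s k * p k"] by (simp add: sum.distrib)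
  then show ?thesis by (simp add: algebra_simps)
qed

definition outer_sum_diag :: "'k set \<Rightarrow> nat \<Rightarrow> (nat \<Rightarrow> 'k \<Rightarrow> complex) \<Rightarrow> ('k \<Rightarrow> real) \<Rightarrow> bool" where
  "outer_sum_diag Q M u s \<longleftrightarrow> (\<forall>k\<in>Q. \<forall>k'\<in>Q.
     (\<Sum>l<M. u l k * cnj (u l k')) = (if k = k' then complex_of_real (real M * s k) else 0))"

lemma outer_sum_diag_cnj:
  assumes "outer_sum_diag Q M u s"
  shows "outer_sum_diag Q M (\<lambda>l k. cnj (u l k)) s"
  unfolding outer_sum_diag_def
proof (intro ballI)
  fix k k' assume "k \<in> Q" "k' \<in> Q"
  have "(\<Sum>l<M. cnj (u l k) * cnj (cnj (u l k'))) = cnj (\<Sum>l<M. u l k * cnj (u l k'))"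
    by simp
  also have "\<dots> = (if k = k' then complex_of_real (real M * s k) else 0)"
    using assms \<open>k \<in> Q\<close> \<open>k' \<in> Q\<close> unfolding outer_sum_diag_def by auto
  finally show "(\<Sum>l<M. cnj (u l k) * cnj (cnj (u l k')))
      = (if k = k' then complex_of_real (real M * s k) else 0)" .
qed

lemma sum_sqnorm_outer_sum_diag:
  assumes "outer_sum_diag Q M u s"
  shows "(\<Sum>l<M. sqnorm_on Q (u l)) = real M * (\<Sum>k\<in>Q. s k)"
proof -
  have "(\<Sum>l<M. (cmod (u l k))\<^sup>2) = real M * s k" if "k \<in> Q" for k
  proof -
    have "complex_of_real (\<Sum>l<M. (cmod (u l k))\<^sup>2) = (\<Sum>l<M. u l k * cnj (u l k))"
      by (simp only: of_real_sum complex_norm_square)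
    also have "\<dots> = complex_of_real (real M * s k)"
      using assms that unfolding outer_sum_diag_def by simp
    finally show ?thesis by (simp only: of_real_eq_iff)
  qed
  then show ?thesis
    unfolding sqnorm_on_def by (subst sum.swap) (simp add: sum_distrib_left)
qed

lemma sum_inner_sq_outer_sum_diag:
  assumes fin: "finite Q" and diag: "outer_sum_diag Q M u s"
  shows "(\<Sum>l<M. (cmod (inner_on Q (u l) g))\<^sup>2) = real M * (\<Sum>k\<in>Q. s k * (cmod (g k))\<^sup>2)"
proof -
  have "complex_of_real (\<Sum>l<M. (cmod (inner_on Q (u l) g))\<^sup>2)
      = (\<Sum>l<M. inner_on Q (u l) g * cnj (inner_on Q (u l) g))"
    by (simp only: of_real_sum complex_norm_square)
  also have "\<dots> = (\<Sum>l<M. \<Sum>k\<in>Q. \<Sum>k'\<in>Q. (cnj (g k) * g k') * (u l k * cnj (u l k')))"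
    unfolding inner_on_def by (simp add: sum_product sum_distrib_left sum_distrib_right mult_ac)
  also have "\<dots> = (\<Sum>k\<in>Q. \<Sum>k'\<in>Q. (cnj (g k) * g k') * (\<Sum>l<M. u l k * cnj (u l k')))"
    by (simp add: sum_distrib_left sum.swap[of _ "{..<M}"])
  also have "\<dots> = (\<Sum>k\<in>Q. \<Sum>k'\<in>Q. if k' = k then (cnj (g k) * g k) * complex_of_real (real M * s k) else 0)"
    using diag unfolding outer_sum_diag_def by (intro sum.cong refl) auto
  also have "\<dots> = (\<Sum>k\<in>Q. complex_of_real (real M * (s k * (cmod (g k))\<^sup>2)))"
  proof -
    have "cnj (g k) * g k = complex_of_real ((cmod (g k))\<^sup>2)" for k
      by (metis complex_norm_square mult.commute)
    then show ?thesis using fin by (simp add: mult_ac)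
  qed
  also have "\<dots> = complex_of_real (real M * (\<Sum>k\<in>Q. s k * (cmod (g k))\<^sup>2))"
    by (simp add: sum_distrib_left)
  finally show ?thesis by (simp only: of_real_eq_iff)
qed

lemma orthonormal_on_coord_mass_le_1:
  assumes fin: "finite Q" and ob: "orthonormal_on Q b r" and k: "k \<in> Q"
  shows "(\<Sum>i<r. (cmod (b i k))\<^sup>2) \<le> 1"
proof -
  define e where "e = (\<lambda>k'. if k' = k then (1::complex) else 0)"
  have "inner_on Q e (b i) = (\<Sum>k'\<in>Q. if k' = k then cnj (b i k') else 0)" for i
    unfolding inner_on_def e_def by (intro sum.cong) auto
  moreover have "sqnorm_on Q e = (\<Sum>k'\<in>Q. if k' = k then 1 else 0)"
    unfolding sqnorm_on_def e_def by (intro sum.cong) auto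
  ultimately show ?thesis using bessel_inequality[OF ob, of e] fin k by simp
qed

lemma orthonormal_on_total_mass:
  assumes "orthonormal_on Q b r"
  shows "(\<Sum>k\<in>Q. \<Sum>i<r. (cmod (b i k))\<^sup>2) = real r"
proof -
  have "sqnorm_on Q (b i) = 1" if "i < r" for i
    using assms that inner_on_self[of Q "b i"] unfolding orthonormal_on_def by simp
  moreover have "(\<Sum>k\<in>Q. \<Sum>i<r. (cmod (b i k))\<^sup>2) = (\<Sum>i<r. sqnorm_on Q (b i))"
    unfolding sqnorm_on_def by (rule sum.swap)
  ultimately show ?thesis by simp
qed

text \<open>Summed over \<open>l\<close>, the squared distances of the \<open>u\<^sub>l\<close> to a subspace \<open>V\<close> equal \<open>M\<close> times
  the trace of \<open>diag s\<close> on \<open>V\<^sup>\<bottom>\<close>; on \<open>V\<close> itself, with \<open>dim V \<le> card J\<close>, that trace is at most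
  \<open>\<Sum>\<^sub>k\<^sub>\<in>\<^sub>J s k\<close>.\<close>

lemma exists_far_from_span:
  fixes u ys :: "nat \<Rightarrow> 'k \<Rightarrow> complex" and a :: "nat \<Rightarrow> nat \<Rightarrow> complex" and s :: "'k \<Rightarrow> real"
  assumes fin: "finite Q" and JQ: "J \<subseteq> Q" and mJ: "m \<le> card J" and M: "0 < M"
    and diag: "outer_sum_diag Q M u s"
    and s0: "\<And>k. k \<in> Q \<Longrightarrow> 0 \<le> s k"
    and top: "\<And>k k'. k \<in> J \<Longrightarrow> k' \<in> Q - J \<Longrightarrow> s k' \<le> s k"
  shows "\<exists>l<M. sqnorm_on Q (\<lambda>k. u l k - (\<Sum>j<m. a l j * ys j k)) \<ge> (\<Sum>k\<in>Q. s k) - (\<Sum>k\<in>J. s k)"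
proof -
  obtain r b where r: "r \<le> m" and ob: "orthonormal_on Q b r"
    and sp: "\<forall>j<m. in_span_on Q b r (ys j)"
    using gram_schmidt_on[OF fin, of m ys] by blast
  obtain C where C: "\<forall>j<m. \<forall>k\<in>Q. ys j k = (\<Sum>i<r. C j i * b i k)"
    using sp unfolding in_span_on_def by metis
  define E where "E = (\<lambda>l. sqnorm_on Q (\<lambda>k. u l k - (\<Sum>j<m. a l j * ys j k)))"
  have E_ge: "E l \<ge> sqnorm_on Q (u l) - (\<Sum>i<r. (cmod (inner_on Q (u l) (b i)))\<^sup>2)" for l
  proof -
    have "(\<Sum>j<m. a l j * ys j k) = (\<Sum>i<r. (\<Sum>j<m. a l j * C j i) * b i k)" if "k \<in> Q" for k
      using C that
      by (simp add: sum_distrib_left sum_distrib_right sum.swap[of _ "{..<m}"] mult_ac)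
    then have "E l = sqnorm_on Q (\<lambda>k. u l k - (\<Sum>i<r. (\<Sum>j<m. a l j * C j i) * b i k))"
      unfolding E_def by (intro sqnorm_on_cong) simp
    then show ?thesis using sqnorm_on_diff_lincomb_ge[OF ob] by simp
  qed
  define p where "p = (\<lambda>k. \<Sum>i<r. (cmod (b i k))\<^sup>2)"
  have proj: "(\<Sum>l<M. \<Sum>i<r. (cmod (inner_on Q (u l) (b i)))\<^sup>2) = real M * (\<Sum>k\<in>Q. s k * p k)"
    by (subst sum.swap)
      (simp add: sum_inner_sq_outer_sum_diag[OF fin diag] p_def sum_distrib_left sum.swap[of _ "{..<r}"])
  have "(\<Sum>k\<in>Q. s k * p k) \<le> (\<Sum>k\<in>J. s k)"
  proof (rule weighted_sum_le_top_sum[OF fin JQ _ _ s0 top])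
    show "(\<Sum>k\<in>Q. p k) \<le> real (card J)"
      using orthonormal_on_total_mass[OF ob] r mJ unfolding p_def by simp
    show "0 \<le> p k \<and> p k \<le> 1" if "k \<in> Q" for k
      using orthonormal_on_coord_mass_le_1[OF fin ob that] unfolding p_def by (simp add: sum_nonneg)
  qed
  then have "real M * (\<Sum>k\<in>Q. s k * p k) \<le> real M * (\<Sum>k\<in>J. s k)"
    by (intro mult_left_mono) auto
  moreover have "(\<Sum>l<M. sqnorm_on Q (u l) - (\<Sum>i<r. (cmod (inner_on Q (u l) (b i)))\<^sup>2)) \<le> (\<Sum>l<M. E l)"
    by (intro sum_mono E_ge)
  ultimately have total: "real M * ((\<Sum>k\<in>Q. s k) - (\<Sum>k\<in>J. s k)) \<le> (\<Sum>l<M. E l)"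
    by (simp add: sum_subtractf proj sum_sqnorm_outer_sum_diag[OF diag] right_diff_distrib)
  show ?thesis
  proof (rule ccontr)
    assume "\<not> ?thesis"
    then have "(\<Sum>l<M. E l) < (\<Sum>l<M. (\<Sum>k\<in>Q. s k) - (\<Sum>k\<in>J. s k))"
      using M unfolding E_def by (intro sum_strict_mono) auto
    then show False using total by simp
  qed
qed

section \<open>Characters sampled on a finite grid\<close>

definition unit_root :: "nat \<Rightarrow> int \<Rightarrow> complex" where
  "unit_root M a = cis (2 * pi * real_of_int a / real M)"

lemma norm_unit_root [simp]: "cmod (unit_root M a) = 1"
  unfolding unit_root_def by simp

lemma unit_root_add: "unit_root M (a + b) = unit_root M a * unit_root M b"
  unfolding unit_root_def cis_mult by (simp add: add_divide_distrib algebra_simps)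

lemma unit_root_cnj: "cnj (unit_root M a) = unit_root M (- a)"
  unfolding unit_root_def cis_cnj by simp

lemma unit_root_nat_mult: "unit_root M (int l * a) = unit_root M a ^ l"
proof -
  have "unit_root M a ^ l = cis (real l * (2 * pi * real_of_int a / real M))"
    unfolding unit_root_def by (rule Complex.DeMoivre)
  then show ?thesis unfolding unit_root_def by (simp add: mult_ac)
qed

lemma unit_root_eq_1_iff:
  assumes "M > 0"
  shows "unit_root M a = 1 \<longleftrightarrow> int M dvd a"
proof
  assume "unit_root M a = 1"
  then obtain n :: int where "2 * pi * real_of_int a / real M = of_int (2 * n) * pi"
    unfolding unit_root_def cis_conv_exp exp_eq_1 by auto
  then have "real_of_int a = real_of_int (int M * n)" using assms by (simp add: field_simps)
  then have "a = int M * n" by (simp only: of_int_eq_iff)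
  then show "int M dvd a" by simp
next
  assume "int M dvd a"
  then obtain n where "a = int M * n" by (auto elim: dvdE)
  then have "2 * pi * real_of_int a / real M = 2 * pi * real_of_int n" using assms by simp
  then show "unit_root M a = 1" unfolding unit_root_def by simp
qed

lemma unit_root_cong:
  assumes "M > 0" "int M dvd (a - b)"
  shows "unit_root M a = unit_root M b"
  using unit_root_add[of M "a - b" b] unit_root_eq_1_iff[OF assms(1), of "a - b"] assms(2) by simp

lemma sum_unit_root:
  assumes "M > 0"
  shows "(\<Sum>l<M. unit_root M (int l * h)) = (if int M dvd h then of_nat M else 0)"
proof (cases "int M dvd h")
  case True
  then have "unit_root M h = 1" using assms by (simp add: unit_root_eq_1_iff)
  then show ?thesis using True by (simp add: unit_root_nat_mult)
next
  case False
  define \<omega> where "\<omega> = unit_root M h"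
  have "\<omega> \<noteq> 1" using False assms unfolding \<omega>_def by (simp add: unit_root_eq_1_iff)
  moreover have "\<omega> ^ M = 1"
    using assms unfolding \<omega>_def unit_root_nat_mult[symmetric] by (simp add: unit_root_eq_1_iff)
  ultimately have "(\<Sum>l<M. \<omega> ^ l) = 0" by (simp add: geometric_sum)
  then show ?thesis using False unfolding \<omega>_def by (simp add: unit_root_nat_mult)
qed

definition int_dot :: "int^'d::finite \<Rightarrow> int^'d \<Rightarrow> int" where
  "int_dot z k = (\<Sum>i\<in>UNIV. k $ i * z $ i)"

lemma int_dot_diff: "int_dot z (k - k') = int_dot z k - int_dot z k'"
  unfolding int_dot_def by (simp add: algebra_simps sum_subtractf)

lemma finite_zeros_sum_powers:
  fixes f :: "'d::finite \<Rightarrow> nat" and h :: "int^'d"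
  assumes f: "inj f" and h: "h \<noteq> 0"
  shows "finite {x::real. (\<Sum>i\<in>UNIV. real_of_int (h $ i) * x ^ f i) = 0}"
proof -
  define N where "N = Max (range f)"
  have fN: "f ` UNIV \<subseteq> {..N}" unfolding N_def by auto
  define c where "c j = (\<Sum>i\<in>{i. f i = j}. real_of_int (h $ i))" for j
  have "(\<Sum>j\<le>N. c j * x ^ j) = (\<Sum>j\<le>N. \<Sum>i\<in>{i\<in>UNIV. f i = j}. real_of_int (h $ i) * x ^ f i)" for x
    unfolding c_def sum_distrib_right by (intro sum.cong) auto
  also have "\<dots> x = (\<Sum>i\<in>UNIV. real_of_int (h $ i) * x ^ f i)" for x
    by (rule sum.group[OF finite finite_atMost fN])
  finally have poly: "(\<Sum>i\<in>UNIV. real_of_int (h $ i) * x ^ f i) = (\<Sum>j\<le>N. c j * x ^ j)" for x ..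
  obtain i0 where i0: "h $ i0 \<noteq> 0" using h by (metis vec_eq_iff zero_index)
  have "{i. f i = f i0} = {i0}" using f by (auto simp: inj_eq)
  then have "c (f i0) \<noteq> 0" using i0 unfolding c_def by simp
  moreover have "f i0 \<le> N" using fN by auto
  ultimately show ?thesis unfolding poly polyfun_finite_roots by blast
qed

text \<open>With \<open>z = (T\<^bsup>f i\<^esup>)\<^sub>i\<close> for an injection \<open>f\<close> of the coordinates into \<open>\<nat>\<close>, a collision
  \<open>int_dot z k = int_dot z k'\<close> makes \<open>T\<close> a root of a nonzero polynomial; only finitely
  many \<open>T\<close> are excluded.\<close>

lemma exists_int_dot_inj_on:
  fixes Q :: "(int^'d::finite) set"
  assumes "finite Q"
  shows "\<exists>z. inj_on (int_dot z) Q"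
proof -
  obtain f :: "'d \<Rightarrow> nat" where f: "inj f"
    using finite_imp_inj_to_nat_seg[of "UNIV :: 'd set"] by auto
  define D where "D = {k - k' |k k'. k \<in> Q \<and> k' \<in> Q \<and> k \<noteq> k'}"
  have "D \<subseteq> (\<lambda>(k, k'). k - k') ` (Q \<times> Q)" unfolding D_def by auto
  then have "finite D" by (rule finite_subset) (use assms in simp)
  define R where "R = (\<Union>h\<in>D. {x::real. (\<Sum>i\<in>UNIV. real_of_int (h $ i) * x ^ f i) = 0})"
  have "finite R"
    unfolding R_def using \<open>finite D\<close>
    by (rule finite_UN_I) (auto simp: D_def intro: finite_zeros_sum_powers[OF f])
  then have "finite (of_int -` R :: int set)" by (rule finite_vimageI) (simp add: inj_on_def)
  then obtain T :: int where T: "T \<notin> of_int -` R"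
    using ex_new_if_finite[OF infinite_UNIV_int] by blast
  define z where "z = (\<chi> i. T ^ f i)"
  have "inj_on (int_dot z) Q"
  proof (rule inj_onI, rule ccontr)
    fix k k' assume k: "k \<in> Q" "k' \<in> Q" "int_dot z k = int_dot z k'" "k \<noteq> k'"
    then have "k - k' \<in> D" unfolding D_def by blast
    have "(\<Sum>i\<in>UNIV. real_of_int ((k - k') $ i) * real_of_int T ^ f i) = real_of_int (int_dot z (k - k'))"
      by (simp only: int_dot_def z_def vec_lambda_beta of_int_sum of_int_mult of_int_power)
    also have "\<dots> = 0" using k(3) by (simp add: int_dot_diff)
    finally have "real_of_int T \<in> R" unfolding R_def using \<open>k - k' \<in> D\<close> by blast
    then show False using T by simp
  qed
  then show ?thesis by blast
qed

lemma exists_int_dot_mod_inj_on: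
  fixes Q :: "(int^'d::finite) set"
  assumes "finite Q"
  shows "\<exists>M>0. \<exists>z. inj_on (\<lambda>k. int_dot z k mod int M) Q"
proof -
  obtain z where z: "inj_on (int_dot z) Q" using exists_int_dot_inj_on[OF assms] by blast
  define B where "B = Max (insert 0 ((\<lambda>k. \<bar>int_dot z k\<bar>) ` Q))"
  have B: "\<bar>int_dot z k\<bar> \<le> B" if "k \<in> Q" for k unfolding B_def using assms that by simp
  have B0: "B \<ge> 0" unfolding B_def using assms by simp
  define M where "M = nat (2 * B + 1)"
  have M: "int M = 2 * B + 1" unfolding M_def using B0 by simp
  have "inj_on (\<lambda>k. int_dot z k mod int M) Q"
  proof (rule inj_onI)
    fix k k' assume k: "k \<in> Q" "k' \<in> Q" and "int_dot z k mod int M = int_dot z k' mod int M"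
    then have d: "int M dvd (int_dot z k - int_dot z k')" by (simp add: mod_eq_dvd_iff)
    have "\<bar>int_dot z k - int_dot z k'\<bar> < \<bar>int M\<bar>" using B[OF k(1)] B[OF k(2)] M by linarith
    then have "int_dot z k - int_dot z k' = 0" using d dvd_imp_le_int by (meson not_le)
    then have "int_dot z k = int_dot z k'" by simp
    then show "k = k'" using z k unfolding inj_on_def by blast
  qed
  moreover have "M > 0" using M B0 by linarith
  ultimately show ?thesis by blast
qed

lemma outer_sum_diag_unit_root:
  assumes M: "M > 0" and inj: "inj_on (\<lambda>k. int_dot z k mod int M) Q"
  shows "outer_sum_diag Q M (\<lambda>l k. complex_of_real (\<sigma> k) * unit_root M (int l * int_dot z k))
           (\<lambda>k. (\<sigma> k)\<^sup>2)"
  unfolding outer_sum_diag_def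
proof (intro ballI)
  fix k k' assume k: "k \<in> Q" "k' \<in> Q"
  have "(\<Sum>l<M. complex_of_real (\<sigma> k) * unit_root M (int l * int_dot z k) *
          cnj (complex_of_real (\<sigma> k') * unit_root M (int l * int_dot z k')))
      = complex_of_real (\<sigma> k * \<sigma> k') * (\<Sum>l<M. unit_root M (int l * (int_dot z k - int_dot z k')))"
    by (simp add: sum_distrib_left unit_root_cnj unit_root_add[symmetric] algebra_simps)
  also have "\<dots> = (if k = k' then complex_of_real (real M * (\<sigma> k)\<^sup>2) else 0)"
  proof -
    have "int M dvd (int_dot z k - int_dot z k') \<longleftrightarrow> k = k'"
      using inj k by (auto simp: mod_eq_dvd_iff[symmetric] dest: inj_onD)
    then show ?thesis by (simp add: sum_unit_root[OF M] power2_eq_square)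
  qed
  finally show "(\<Sum>l<M. complex_of_real (\<sigma> k) * unit_root M (int l * int_dot z k) *
          cnj (complex_of_real (\<sigma> k') * unit_root M (int l * int_dot z k')))
      = (if k = k' then complex_of_real (real M * (\<sigma> k)\<^sup>2) else 0)" .
qed

definition grid_point :: "nat \<Rightarrow> int^'d::finite \<Rightarrow> nat \<Rightarrow> real^'d" where
  "grid_point M z l = (\<chi> i. 2 * pi * real_of_int ((int l * z $ i) mod int M) / real M)"

lemma grid_point_in_torus:
  assumes "M > 0"
  shows "grid_point M z l \<in> torus"
proof -
  have "0 \<le> grid_point M z l $ i \<and> grid_point M z l $ i < 2 * pi" for i
  proof -
    define r where "r = (int l * z $ i) mod int M"
    have "0 \<le> r" "r < int M" unfolding r_def using assms by auto
    then have "0 \<le> real_of_int r" "real_of_int r < real M" by linarith+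
    then have "0 \<le> 2 * pi * real_of_int r / real M" "2 * pi * real_of_int r / real M < 2 * pi"
      using assms by (simp_all add: divide_less_eq)
    then show ?thesis unfolding grid_point_def r_def by simp
  qed
  then show ?thesis unfolding torus_def by blast
qed

lemma exp_kdot_grid_point:
  assumes "M > 0"
  shows "exp (\<i> * complex_of_real (kdot k (grid_point M z l))) = unit_root M (int l * int_dot z k)"
proof -
  define e where "e = (\<Sum>i\<in>UNIV. k $ i * ((int l * z $ i) mod int M))"
  have "exp (\<i> * complex_of_real (kdot k (grid_point M z l))) = unit_root M e"
    unfolding kdot_def grid_point_def e_def unit_root_def cis_conv_exp
    by (simp add: sum_divide_distrib sum_distrib_left mult_ac)
  also have "\<dots> = unit_root M (int l * int_dot z k)"
  proof (rule unit_root_cong[OF assms])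
    have "e - int l * int_dot z k = (\<Sum>i\<in>UNIV. k $ i * ((int l * z $ i) mod int M - int l * z $ i))"
      unfolding e_def int_dot_def by (simp add: algebra_simps sum_subtractf sum_distrib_left)
    moreover have "int M dvd (int l * z $ i) mod int M - int l * z $ i" for i
      by (simp add: mod_eq_dvd_iff[symmetric])
    ultimately show "int M dvd (e - int l * int_dot z k)" by (simp add: dvd_sum)
  qed
  finally show ?thesis .
qed

section \<open>Estimates in the sequence spaces\<close>

lemma F_norm_nonneg: "F_norm v c \<ge> 0"
  unfolding F_norm_def by (simp add: infsum_nonneg)

lemma F_norm_sq: "(F_norm v c)\<^sup>2 = (\<Sum>\<^sub>\<infinity>k. (v k)\<^sup>2 * (cmod (c k))\<^sup>2)"
  unfolding F_norm_def by (simp add: infsum_nonneg)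

lemma A_norm_nonneg: "A_norm c \<ge> 0"
  unfolding A_norm_def by (simp add: infsum_nonneg)

lemma weighted_sq_summable_bounded:
  fixes v :: "'a \<Rightarrow> real" and c :: "'a \<Rightarrow> complex"
  assumes sv: "(\<lambda>k. (v k)\<^sup>2) summable_on UNIV" and cb: "\<And>k. cmod (c k) \<le> B"
  shows "(\<lambda>k. (v k)\<^sup>2 * (cmod (c k))\<^sup>2) summable_on UNIV"
    and "(\<Sum>\<^sub>\<infinity>k. (v k)\<^sup>2 * (cmod (c k))\<^sup>2) \<le> B\<^sup>2 * (\<Sum>\<^sub>\<infinity>k. (v k)\<^sup>2)"
proof -
  have le: "(v k)\<^sup>2 * (cmod (c k))\<^sup>2 \<le> B\<^sup>2 * (v k)\<^sup>2" for k
    using power_mono[OF cb[of k] norm_ge_zero, of 2] by (metis mult.commute mult_left_mono zero_le_power2)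
  have s2: "(\<lambda>k. B\<^sup>2 * (v k)\<^sup>2) summable_on UNIV" using sv by (rule summable_on_cmult_right)
  show s1: "(\<lambda>k. (v k)\<^sup>2 * (cmod (c k))\<^sup>2) summable_on UNIV"
    by (rule summable_on_comparison_test[OF s2]) (use le in auto)
  show "(\<Sum>\<^sub>\<infinity>k. (v k)\<^sup>2 * (cmod (c k))\<^sup>2) \<le> B\<^sup>2 * (\<Sum>\<^sub>\<infinity>k. (v k)\<^sup>2)"
    using infsum_mono[OF s1 s2 le] sv by (simp add: infsum_cmult_right)
qed

lemma F_norm_le_sup_coeff:
  assumes "(\<lambda>k. (v k)\<^sup>2) summable_on UNIV" "\<And>k. cmod (c k) \<le> B"
  shows "F_norm v c \<le> B * sqrt (\<Sum>\<^sub>\<infinity>k. (v k)\<^sup>2)"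
proof -
  have "0 \<le> B" using assms(2)[of undefined] by (meson norm_ge_zero order_trans)
  then have "sqrt ((F_norm v c)\<^sup>2) \<le> sqrt (B\<^sup>2 * (\<Sum>\<^sub>\<infinity>k. (v k)\<^sup>2))"
    unfolding F_norm_sq using weighted_sq_summable_bounded(2)[OF assms] by simp
  then show ?thesis using \<open>0 \<le> B\<close> by (simp add: F_norm_nonneg real_sqrt_mult)
qed

text \<open>A crude triangle inequality, enough for the boundedness arguments below.\<close>

lemma F_norm_diff_le:
  fixes v :: "int^'d::finite \<Rightarrow> real" and a b :: "'d coeffs"
  assumes sa: "(\<lambda>k. (v k)\<^sup>2 * (cmod (a k))\<^sup>2) summable_on UNIV"
    and sb: "(\<lambda>k. (v k)\<^sup>2 * (cmod (b k))\<^sup>2) summable_on UNIV"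
  shows "(\<lambda>k. (v k)\<^sup>2 * (cmod (a k - b k))\<^sup>2) summable_on UNIV"
    and "F_norm v (\<lambda>k. a k - b k) \<le> 2 * (F_norm v a + F_norm v b)"
proof -
  have le: "(v k)\<^sup>2 * (cmod (a k - b k))\<^sup>2 \<le> 2 * ((v k)\<^sup>2 * (cmod (a k))\<^sup>2) + 2 * ((v k)\<^sup>2 * (cmod (b k))\<^sup>2)"
    for k
  proof -
    have "(cmod (a k - b k))\<^sup>2 \<le> (cmod (a k) + cmod (b k))\<^sup>2"
      by (simp add: norm_triangle_ineq4 power_mono)
    also have "\<dots> \<le> 2 * (cmod (a k))\<^sup>2 + 2 * (cmod (b k))\<^sup>2"
      using sum_squares_ge_zero[of "cmod (a k) - cmod (b k)" 0] by (simp add: power2_eq_square algebra_simps)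
    finally have "(v k)\<^sup>2 * (cmod (a k - b k))\<^sup>2 \<le> (v k)\<^sup>2 * (2 * (cmod (a k))\<^sup>2 + 2 * (cmod (b k))\<^sup>2)"
      by (rule mult_left_mono) simp
    then show ?thesis by (simp add: algebra_simps)
  qed
  have s2: "(\<lambda>k. 2 * ((v k)\<^sup>2 * (cmod (a k))\<^sup>2) + 2 * ((v k)\<^sup>2 * (cmod (b k))\<^sup>2)) summable_on UNIV"
    using sa sb by (intro summable_on_add summable_on_cmult_right)
  show s1: "(\<lambda>k. (v k)\<^sup>2 * (cmod (a k - b k))\<^sup>2) summable_on UNIV"
    by (rule summable_on_comparison_test[OF s2]) (use le in auto)
  have "(F_norm v (\<lambda>k. a k - b k))\<^sup>2 \<le> 2 * (F_norm v a)\<^sup>2 + 2 * (F_norm v b)\<^sup>2"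
    unfolding F_norm_sq using infsum_mono[OF s1 s2 le] sa sb
    by (simp add: infsum_add summable_on_cmult_right infsum_cmult_right)
  also have "\<dots> \<le> (2 * (F_norm v a + F_norm v b))\<^sup>2"
    using F_norm_nonneg[of v a] F_norm_nonneg[of v b] by (simp add: power2_eq_square algebra_simps)
  finally show "F_norm v (\<lambda>k. a k - b k) \<le> 2 * (F_norm v a + F_norm v b)"
    using F_norm_nonneg[of v a] F_norm_nonneg[of v b] power2_le_imp_le by fastforce
qed

lemma A_norm_diff_le:
  fixes a b :: "'d::finite coeffs"
  assumes sa: "(\<lambda>k. cmod (a k)) summable_on UNIV" and sb: "(\<lambda>k. cmod (b k)) summable_on UNIV"
  shows "(\<lambda>k. cmod (a k - b k)) summable_on UNIV"
    and "A_norm (\<lambda>k. a k - b k) \<le> A_norm a + A_norm b"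
proof -
  have s2: "(\<lambda>k. cmod (a k) + cmod (b k)) summable_on UNIV" by (rule summable_on_add[OF sa sb])
  show s1: "(\<lambda>k. cmod (a k - b k)) summable_on UNIV"
    by (rule summable_on_comparison_test[OF s2]) (auto simp: norm_triangle_ineq4)
  show "A_norm (\<lambda>k. a k - b k) \<le> A_norm a + A_norm b"
    unfolding A_norm_def infsum_add[OF sa sb, symmetric]
    by (rule infsum_mono[OF s1 s2]) (simp add: norm_triangle_ineq4)
qed

lemma infsum_abs_mult_le:
  fixes g h :: "'a \<Rightarrow> real"
  assumes sg: "(\<lambda>k. (g k)\<^sup>2) summable_on UNIV" and sh: "(\<lambda>k. (h k)\<^sup>2) summable_on UNIV"
  shows "(\<lambda>k. \<bar>g k * h k\<bar>) summable_on UNIV"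
    and "(\<Sum>\<^sub>\<infinity>k. \<bar>g k * h k\<bar>) \<le> sqrt (\<Sum>\<^sub>\<infinity>k. (g k)\<^sup>2) * sqrt (\<Sum>\<^sub>\<infinity>k. (h k)\<^sup>2)"
proof -
  define C where "C = sqrt (\<Sum>\<^sub>\<infinity>k. (g k)\<^sup>2) * sqrt (\<Sum>\<^sub>\<infinity>k. (h k)\<^sup>2)"
  have fin: "(\<Sum>k\<in>F. \<bar>g k * h k\<bar>) \<le> C" if "finite F" for F
  proof -
    have "(\<Sum>k\<in>F. \<bar>g k * h k\<bar>) \<le> L2_set g F * L2_set h F"
      by (simp add: abs_mult L2_set_mult_ineq)
    also have "\<dots> \<le> C" unfolding C_def L2_set_def
      using that by (intro mult_mono real_sqrt_le_mono finite_sum_le_infsum sg sh)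
        (auto simp: sum_nonneg infsum_nonneg)
    finally show ?thesis .
  qed
  show s: "(\<lambda>k. \<bar>g k * h k\<bar>) summable_on UNIV"
    by (rule nonneg_bdd_above_summable_on) (use fin in \<open>auto simp: bdd_above_def\<close>)
  show "(\<Sum>\<^sub>\<infinity>k. \<bar>g k * h k\<bar>) \<le> C"
    by (rule infsum_le_finite_sums[OF s fin])
qed

text \<open>Cauchy--Schwarz against \<open>1/w\<close>: the embedding \<open>F\<^sub>d(w) \<subseteq> \<A>(\<T>\<^sup>d)\<close>, localised to a set \<open>S\<close>.\<close>

lemma A_norm_le_F_norm:
  fixes w :: "int^'d::finite \<Rightarrow> real" and x :: "'d coeffs"
  assumes wpos: "\<And>k. w k > 0" and sw: "(\<lambda>k. 1 / (w k)\<^sup>2) summable_on UNIV"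
    and sx: "(\<lambda>k. (w k)\<^sup>2 * (cmod (x k))\<^sup>2) summable_on UNIV" and S: "\<And>k. k \<notin> S \<Longrightarrow> x k = 0"
  shows "(\<lambda>k. cmod (x k)) summable_on UNIV"
    and "(\<Sum>\<^sub>\<infinity>k. cmod (x k)) \<le> sqrt (\<Sum>\<^sub>\<infinity>k\<in>S. 1 / (w k)\<^sup>2) * F_norm w x"
proof -
  define g where "g = (\<lambda>k. if k \<in> S then 1 / w k else 0)"
  define h where "h = (\<lambda>k. w k * cmod (x k))"
  have gh: "cmod (x k) = \<bar>g k * h k\<bar>" for k
    using wpos[of k] S[of k] unfolding g_def h_def by (cases "k \<in> S") (auto simp: abs_mult)
  have sg: "(\<lambda>k. (g k)\<^sup>2) summable_on UNIV"
    by (rule summable_on_comparison_test[OF sw]) (auto simp: g_def power_divide)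
  have sh: "(\<lambda>k. (h k)\<^sup>2) summable_on UNIV" using sx unfolding h_def by (simp add: power_mult_distrib)
  show "(\<lambda>k. cmod (x k)) summable_on UNIV" unfolding gh by (rule infsum_abs_mult_le(1)[OF sg sh])
  have "(\<Sum>\<^sub>\<infinity>k. cmod (x k)) = (\<Sum>\<^sub>\<infinity>k. \<bar>g k * h k\<bar>)" unfolding gh ..
  also have "\<dots> \<le> sqrt (\<Sum>\<^sub>\<infinity>k. (g k)\<^sup>2) * sqrt (\<Sum>\<^sub>\<infinity>k. (h k)\<^sup>2)"
    by (rule infsum_abs_mult_le(2)[OF sg sh])
  also have "(\<Sum>\<^sub>\<infinity>k. (g k)\<^sup>2) = (\<Sum>\<^sub>\<infinity>k\<in>S. 1 / (w k)\<^sup>2)"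
    unfolding g_def by (rule infsum_cong_neutral) (auto simp: power_divide)
  also have "(\<Sum>\<^sub>\<infinity>k. (h k)\<^sup>2) = (F_norm w x)\<^sup>2"
    unfolding h_def F_norm_sq by (simp add: power_mult_distrib)
  finally show "(\<Sum>\<^sub>\<infinity>k. cmod (x k)) \<le> sqrt (\<Sum>\<^sub>\<infinity>k\<in>S. 1 / (w k)\<^sup>2) * F_norm w x"
    by (simp add: F_norm_nonneg)
qed

section \<open>Operator norms and tails\<close>

lemma le_op_norm:
  assumes "x \<in> X" "nX x \<le> 1" and bound: "\<And>y. y \<in> X \<Longrightarrow> nX y \<le> 1 \<Longrightarrow> nY (T y) \<le> B"
  shows "nY (T x) \<le> op_norm X nX nY T"
  unfolding op_norm_def by (rule cSUP_upper) (use assms in \<open>auto simp: bdd_above_def\<close>)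

lemma op_norm_le:
  assumes "x \<in> X" "nX x \<le> 1" and "\<And>y. y \<in> X \<Longrightarrow> nX y \<le> 1 \<Longrightarrow> nY (T y) \<le> B"
  shows "op_norm X nX nY T \<le> B"
  unfolding op_norm_def by (rule cSUP_least) (use assms in auto)

lemma infsum_compl_le:
  fixes s :: "'a \<Rightarrow> real"
  assumes ss: "s summable_on UNIV" and s0: "\<And>k. 0 \<le> s k" and finJ: "finite J"
    and bound: "\<And>Q. finite Q \<Longrightarrow> J \<subseteq> Q \<Longrightarrow> (\<Sum>k\<in>Q. s k) - (\<Sum>k\<in>J. s k) \<le> B"
  shows "(\<Sum>\<^sub>\<infinity>k\<in>-J. s k) \<le> B"
proof (rule infsum_le_finite_sums)
  show "s summable_on -J" using ss by (rule summable_on_subset_banach) simp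
  fix F assume "finite F" "F \<subseteq> -J"
  then have "(\<Sum>k\<in>F. s k) = (\<Sum>k\<in>F \<union> J. s k) - (\<Sum>k\<in>J. s k)"
    using finJ by (subst sum.union_disjoint) auto
  also have "\<dots> \<le> B" using \<open>finite F\<close> finJ by (intro bound) auto
  finally show "(\<Sum>k\<in>F. s k) \<le> B" .
qed

lemma finite_summable_ge:
  fixes s :: "'a \<Rightarrow> real"
  assumes ss: "s summable_on UNIV" and s0: "\<And>k. 0 \<le> s k" and e: "e > 0"
  shows "finite {k. e \<le> s k}"
proof (rule ccontr)
  assume "infinite {k. e \<le> s k}"
  moreover obtain N :: nat where N: "(\<Sum>\<^sub>\<infinity>k. s k) / e < real N" using reals_Archimedean2 by blast
  ultimately obtain F where F: "F \<subseteq> {k. e \<le> s k}" "finite F" "card F = N"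
    using infinite_arbitrarily_large by blast
  have "real N * e = (\<Sum>k\<in>F. e)" using F by simp
  also have "\<dots> \<le> (\<Sum>k\<in>F. s k)" using F by (intro sum_mono) auto
  also have "\<dots> \<le> (\<Sum>\<^sub>\<infinity>k. s k)" using F(2) by (intro finite_sum_le_infsum ss) (auto simp: s0)
  finally show False using N e by (simp add: divide_less_eq)
qed

text \<open>Built greedily; the maxima exist because superlevel sets of a summable positive function
  are finite.\<close>

lemma exists_top_set:
  fixes s :: "'a \<Rightarrow> real"
  assumes ss: "s summable_on UNIV" and s0: "\<And>k. 0 < s k" and inf: "infinite (UNIV :: 'a set)"
  shows "\<exists>J. finite J \<and> card J = p \<and> (\<forall>k\<in>J. \<forall>k'. k' \<notin> J \<longrightarrow> s k' \<le> s k)"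
proof (induction p)
  case 0
  show ?case by auto
next
  case (Suc p)
  then obtain J where J: "finite J" "card J = p" and top: "\<forall>k\<in>J. \<forall>k'. k' \<notin> J \<longrightarrow> s k' \<le> s k"
    by blast
  obtain k0 where k0: "k0 \<notin> J" using ex_new_if_finite[OF inf J(1)] by blast
  define S where "S = {k. k \<notin> J \<and> s k0 \<le> s k}"
  have "finite S"
    using finite_summable_ge[OF ss less_imp_le[OF s0] s0[of k0]] unfolding S_def
    by (rule finite_subset[rotated]) blast
  moreover have "k0 \<in> S" unfolding S_def using k0 by blast
  ultimately have "Max (s ` S) \<in> s ` S" by (intro Max_in) auto
  then obtain k where k: "k \<in> S" "s k = Max (s ` S)" by auto
  have k_max: "s k' \<le> s k" if "k' \<in> S" for k' using \<open>finite S\<close> that k(2) by simp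
  have "s k' \<le> s k1" if "k1 \<in> insert k J" "k' \<notin> insert k J" for k1 k'
  proof (cases "k1 = k")
    case True
    then show ?thesis
      using k_max[of k'] k(1) that unfolding S_def by (cases "s k0 \<le> s k'") auto
  next
    case False
    then show ?thesis using top that by auto
  qed
  moreover have "card (insert k J) = Suc p" using J k(1) unfolding S_def by simp
  ultimately show ?case using J(1) by blast
qed

section \<open>The spaces \<open>\<B>\<close> and \<open>\<M>\<close>\<close>

definition dirac_coeffs :: "real^'d::finite \<Rightarrow> 'd coeffs" where
  "dirac_coeffs t = (\<lambda>k. exp (- (\<i> * complex_of_real (kdot k t))))"

lemma norm_dirac_coeffs [simp]: "cmod (dirac_coeffs t k) = 1"
  unfolding dirac_coeffs_def by simp

lemma dirac_coeffs_grid_point: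
  assumes "M > 0"
  shows "dirac_coeffs (grid_point M z l) k = cnj (unit_root M (int l * int_dot z k))"
  unfolding dirac_coeffs_def exp_kdot_grid_point[OF assms, symmetric] by (simp add: exp_cnj)

lemma B_norm_ge_coeff:
  assumes "x \<in> B_set"
  shows "cmod (x k) \<le> B_norm x"
  using assms unfolding B_set_def B_norm_def by (intro cSUP_upper bounded_imp_bdd_above) auto

lemma dirac_coeffs_in_B_set: "dirac_coeffs t \<in> B_set \<and> B_norm (dirac_coeffs t) \<le> 1"
proof -
  have "range (\<lambda>k. cmod (dirac_coeffs t k)) = {1}" by auto
  then show ?thesis unfolding B_set_def B_norm_def by simp
qed

lemma M_norm_ge_coeff:
  assumes "x \<in> M_set"
  shows "cmod (x k) \<le> M_norm x"
  unfolding M_norm_def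
proof (rule cINF_greatest)
  show "{(\<nu>, h). cmeas_rep \<nu> h \<and> x = meas_coeff \<nu> h} \<noteq> {}"
    using assms unfolding M_set_def by blast
  fix p assume "p \<in> {(\<nu>, h). cmeas_rep \<nu> h \<and> x = meas_coeff \<nu> h}"
  then obtain \<nu> h where p: "p = (\<nu>, h)" and x: "x = meas_coeff \<nu> h" by blast
  have "cmod (x k) \<le> integral\<^sup>L \<nu> (\<lambda>y. cmod (exp (- \<i> * complex_of_real (kdot k y)) * h y))"
    unfolding x meas_coeff_def by (rule integral_norm_bound)
  also have "\<dots> = integral\<^sup>L \<nu> (\<lambda>y. cmod (h y))"
    by (simp add: norm_mult)
  finally show "cmod (x k) \<le> (case p of (\<nu>, h) \<Rightarrow> integral\<^sup>L \<nu> (\<lambda>x. cmod (h x)))"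
    using p by simp
qed

lemma dirac_coeffs_in_M_set:
  fixes t :: "real^'d::finite"
  assumes t: "t \<in> torus"
  shows "dirac_coeffs t \<in> M_set \<and> M_norm (dirac_coeffs t) \<le> 1"
proof -
  define \<nu> where "\<nu> = return (borel :: (real^'d) measure) t"
  have ps: "prob_space \<nu>" unfolding \<nu>_def by (rule prob_space_return) simp
  have "torus \<in> sets (borel :: (real^'d) measure)" unfolding torus_def by measurable
  then have rep: "cmeas_rep \<nu> (\<lambda>_. 1)"
    using ps t unfolding cmeas_rep_def \<nu>_def
    by (auto simp: prob_space_def finite_measure.integrable_const)
  have coeff: "meas_coeff \<nu> (\<lambda>_. 1) = dirac_coeffs t"
  proof
    fix k
    have "meas_coeff \<nu> (\<lambda>_. 1) k = exp (- \<i> * complex_of_real (kdot k t)) * 1"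
      unfolding meas_coeff_def \<nu>_def
      by (rule integral_return) (simp, unfold kdot_def, measurable)
    then show "meas_coeff \<nu> (\<lambda>_. 1) k = dirac_coeffs t k" by (simp add: dirac_coeffs_def)
  qed
  define R where "R = {(\<nu>, h). cmeas_rep \<nu> h \<and> dirac_coeffs t = meas_coeff \<nu> h}"
  have "(\<nu>, \<lambda>_. 1) \<in> R" unfolding R_def using rep coeff by simp
  moreover have "bdd_below ((\<lambda>(\<nu>, h). integral\<^sup>L \<nu> (\<lambda>x. cmod (h x))) ` R)"
    by (rule bdd_belowI[of _ 0]) auto
  ultimately have "M_norm (dirac_coeffs t) \<le> integral\<^sup>L \<nu> (\<lambda>x. cmod (1::complex))"
    unfolding M_norm_def R_def[symmetric] using cINF_lower by fastforce
  also have "\<dots> = 1" using ps by (simp add: prob_space.prob_space)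
  finally show ?thesis using rep coeff[symmetric] unfolding M_set_def by blast
qed

section \<open>Upper bounds: coordinate restriction\<close>

lemma finite_support_in_F_set:
  assumes "finite {k. c k \<noteq> 0}"
  shows "c \<in> F_set v"
proof -
  have "cmod (c k) \<le> (\<Sum>k\<in>{k. c k \<noteq> 0}. cmod (c k))" for k
    using assms by (cases "c k = 0") (auto intro: member_le_sum sum_nonneg)
  then have "poly_bounded c"
    unfolding poly_bounded_def by (intro exI[of _ "\<Sum>k\<in>{k. c k \<noteq> 0}. cmod (c k)"] exI[of _ 0]) simp
  moreover have "(\<lambda>k. (v k)\<^sup>2 * (cmod (c k))\<^sup>2) summable_on {k. c k \<noteq> 0}" using assms by simp
  then have "(\<lambda>k. (v k)\<^sup>2 * (cmod (c k))\<^sup>2) summable_on UNIV"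
    by (rule summable_on_cong_neutral[THEN iffD1, rotated -1]) auto
  ultimately show ?thesis unfolding F_set_def by blast
qed

lemma finite_support_in_A_set:
  assumes "finite {k. c k \<noteq> 0}"
  shows "c \<in> A_set"
proof -
  have "(\<lambda>k. cmod (c k)) summable_on {k. c k \<noteq> 0}" using assms by simp
  then show ?thesis unfolding A_set_def mem_Collect_eq
    by (rule summable_on_cong_neutral[THEN iffD1, rotated -1]) auto
qed

definition restrict_coeffs :: "(int^'d::finite) set \<Rightarrow> 'd coeffs \<Rightarrow> 'd coeffs" where
  "restrict_coeffs J x = (\<lambda>k. if k \<in> J then x k else 0)"

lemma finite_support_restrict_coeffs: "finite J \<Longrightarrow> finite {k. restrict_coeffs J x k \<noteq> 0}"
  unfolding restrict_coeffs_def by (rule finite_subset[of _ J]) auto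

lemma linear_restrict_coeffs:
  "restrict_coeffs J (\<lambda>k. x k + y k) = (\<lambda>k. restrict_coeffs J x k + restrict_coeffs J y k)"
  "restrict_coeffs J (\<lambda>k. a * x k) = (\<lambda>k. a * restrict_coeffs J x k)"
  unfolding restrict_coeffs_def by auto

lemma rank_less_restrict_coeffs:
  assumes "finite J"
  shows "rank_less X (restrict_coeffs J) (Suc (card J))"
proof -
  obtain e where e: "bij_betw e {..<card J} J"
    using ex_bij_betw_nat_finite[OF assms] atLeast0LessThan by metis
  define ys where "ys = (\<lambda>j k. if k = e j then (1::complex) else 0)"
  have rep: "restrict_coeffs J x = (\<lambda>k. \<Sum>j<card J. x (e j) * ys j k)" for x
  proof
    fix k
    have "(\<Sum>j<card J. x (e j) * ys j k) = (\<Sum>k'\<in>J. if k = k' then x k' else 0)"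
      unfolding ys_def using sum.reindex_bij_betw[OF e, of "\<lambda>k'. if k = k' then x k' else 0"]
      by (simp add: if_distrib cong: if_cong)
    then show "restrict_coeffs J x k = (\<Sum>j<card J. x (e j) * ys j k)"
      unfolding restrict_coeffs_def using assms by simp
  qed
  have "\<exists>a. restrict_coeffs J x = (\<lambda>k. \<Sum>j<card J. a j * ys j k)" for x
    by (rule exI[of _ "\<lambda>j. x (e j)"]) (rule rep)
  then show ?thesis unfolding rank_less_def by blast
qed

lemma bounded_lin_op_restrict_coeffs_F:
  assumes sv: "(\<lambda>k. (v k)\<^sup>2) summable_on UNIV"
    and dom: "\<And>x k. x \<in> X \<Longrightarrow> cmod (x k) \<le> nX x" and finJ: "finite J"
  shows "bounded_lin_op X nX (F_set v) (F_norm v) (restrict_coeffs J)"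
proof -
  have "F_norm v (restrict_coeffs J x) \<le> nX x * sqrt (\<Sum>\<^sub>\<infinity>k. (v k)\<^sup>2)" if "x \<in> X" for x
  proof (rule F_norm_le_sup_coeff[OF sv])
    show "cmod (restrict_coeffs J x k) \<le> nX x" for k
      using dom[OF that, of k] dom[OF that, of undefined]
      by (auto simp: restrict_coeffs_def intro: order_trans[OF norm_ge_zero])
  qed
  then have "\<forall>x\<in>X. F_norm v (restrict_coeffs J x) \<le> sqrt (\<Sum>\<^sub>\<infinity>k. (v k)\<^sup>2) * nX x"
    by (simp add: mult.commute)
  then show ?thesis unfolding bounded_lin_op_def
    using finite_support_in_F_set[OF finite_support_restrict_coeffs[OF finJ]] linear_restrict_coeffs
    by blast
qed

lemma op_norm_restrict_coeffs_F_le: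
  assumes sv: "(\<lambda>k. (v k)\<^sup>2) summable_on UNIV"
    and dom: "\<And>x k. x \<in> X \<Longrightarrow> cmod (x k) \<le> nX x" and x0: "x0 \<in> X" "nX x0 \<le> 1"
  shows "op_norm X nX (F_norm v) (\<lambda>x k. x k - restrict_coeffs J x k) \<le> sqrt (\<Sum>\<^sub>\<infinity>k\<in>-J. (v k)\<^sup>2)"
proof (rule op_norm_le)
  show "x0 \<in> X" "nX x0 \<le> 1" by (fact x0)+
  fix x assume x: "x \<in> X" "nX x \<le> 1"
  define r where "r = (\<lambda>k. x k - restrict_coeffs J x k)"
  have r: "cmod (r k) \<le> 1" "k \<in> J \<Longrightarrow> r k = 0" for k
    using dom[OF x(1), of k] x(2) unfolding r_def restrict_coeffs_def by auto
  have "(\<Sum>\<^sub>\<infinity>k. (v k)\<^sup>2 * (cmod (r k))\<^sup>2) = (\<Sum>\<^sub>\<infinity>k\<in>-J. (v k)\<^sup>2 * (cmod (r k))\<^sup>2)"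
    using r(2) by (intro infsum_cong_neutral) auto
  also have "\<dots> \<le> (\<Sum>\<^sub>\<infinity>k\<in>-J. (v k)\<^sup>2)"
  proof (rule infsum_mono)
    show "(\<lambda>k. (v k)\<^sup>2 * (cmod (r k))\<^sup>2) summable_on -J"
      using weighted_sq_summable_bounded(1)[OF sv r(1)] by (rule summable_on_subset_banach) simp
    show "(\<lambda>k. (v k)\<^sup>2) summable_on -J" using sv by (rule summable_on_subset_banach) simp
    show "(v k)\<^sup>2 * (cmod (r k))\<^sup>2 \<le> (v k)\<^sup>2" for k
      using r(1)[of k] by (simp add: mult_left_le power_le_one)
  qed
  finally show "F_norm v r \<le> sqrt (\<Sum>\<^sub>\<infinity>k\<in>-J. (v k)\<^sup>2)"
    unfolding F_norm_def by (rule real_sqrt_le_mono)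
qed

lemma bounded_lin_op_restrict_coeffs_A:
  assumes wpos: "\<And>k. w k > 0" and sw: "(\<lambda>k. 1 / (w k)\<^sup>2) summable_on UNIV" and finJ: "finite J"
  shows "bounded_lin_op (F_set w) (F_norm w) A_set A_norm (restrict_coeffs J)"
proof -
  have "A_norm (restrict_coeffs J x) \<le> sqrt (\<Sum>\<^sub>\<infinity>k. 1 / (w k)\<^sup>2) * F_norm w x" if "x \<in> F_set w" for x
  proof -
    have sx: "(\<lambda>k. (w k)\<^sup>2 * (cmod (x k))\<^sup>2) summable_on UNIV" using that unfolding F_set_def by blast
    have sr: "(\<lambda>k. (w k)\<^sup>2 * (cmod (restrict_coeffs J x k))\<^sup>2) summable_on UNIV"
      by (rule summable_on_comparison_test[OF sx]) (auto simp: restrict_coeffs_def)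
    have "A_norm (restrict_coeffs J x) \<le> sqrt (\<Sum>\<^sub>\<infinity>k. 1 / (w k)\<^sup>2) * F_norm w (restrict_coeffs J x)"
      unfolding A_norm_def using A_norm_le_F_norm(2)[OF wpos sw sr, of UNIV] by simp
    also have "F_norm w (restrict_coeffs J x) \<le> F_norm w x"
      unfolding F_norm_def
      by (intro real_sqrt_le_mono infsum_mono[OF sr sx]) (auto simp: restrict_coeffs_def)
    then have "sqrt (\<Sum>\<^sub>\<infinity>k. 1 / (w k)\<^sup>2) * F_norm w (restrict_coeffs J x)
        \<le> sqrt (\<Sum>\<^sub>\<infinity>k. 1 / (w k)\<^sup>2) * F_norm w x"
      by (intro mult_left_mono) (auto simp: infsum_nonneg)
    finally show ?thesis .
  qed
  then show ?thesis unfolding bounded_lin_op_def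
    using finite_support_in_A_set[OF finite_support_restrict_coeffs[OF finJ]] linear_restrict_coeffs
    by blast
qed

lemma op_norm_restrict_coeffs_A_le:
  assumes wpos: "\<And>k. w k > 0" and sw: "(\<lambda>k. 1 / (w k)\<^sup>2) summable_on UNIV"
  shows "op_norm (F_set w) (F_norm w) A_norm (\<lambda>x k. x k - restrict_coeffs J x k)
           \<le> sqrt (\<Sum>\<^sub>\<infinity>k\<in>-J. 1 / (w k)\<^sup>2)"
proof (rule op_norm_le)
  show "(\<lambda>k. 0) \<in> F_set w" "F_norm w (\<lambda>k. 0) \<le> 1"
    by (auto intro: finite_support_in_F_set simp: F_norm_def)
  fix x assume x: "x \<in> F_set w" "F_norm w x \<le> 1"
  have "(\<lambda>k. (w k)\<^sup>2 * (cmod (x k - restrict_coeffs J x k))\<^sup>2) summable_on UNIV"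
    using x(1) unfolding F_set_def
    by (auto intro: summable_on_comparison_test simp: restrict_coeffs_def)
  then have "A_norm (\<lambda>k. x k - restrict_coeffs J x k)
      \<le> sqrt (\<Sum>\<^sub>\<infinity>k\<in>-J. 1 / (w k)\<^sup>2) * F_norm w (\<lambda>k. x k - restrict_coeffs J x k)"
    unfolding A_norm_def by (rule A_norm_le_F_norm(2)[OF wpos sw]) (simp add: restrict_coeffs_def)
  also have "F_norm w (\<lambda>k. x k - restrict_coeffs J x k) \<le> F_norm w x"
    using x(1) \<open>(\<lambda>k. (w k)\<^sup>2 * (cmod (x k - restrict_coeffs J x k))\<^sup>2) summable_on UNIV\<close>
    unfolding F_norm_def F_set_def
    by (intro real_sqrt_le_mono infsum_mono) (auto simp: restrict_coeffs_def)
  then have "F_norm w (\<lambda>k. x k - restrict_coeffs J x k) \<le> 1" using x(2) by linarith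
  then have "sqrt (\<Sum>\<^sub>\<infinity>k\<in>-J. 1 / (w k)\<^sup>2) * F_norm w (\<lambda>k. x k - restrict_coeffs J x k)
      \<le> sqrt (\<Sum>\<^sub>\<infinity>k\<in>-J. 1 / (w k)\<^sup>2)"
    by (intro mult_left_le) (auto simp: infsum_nonneg)
  finally show "A_norm (\<lambda>k. x k - restrict_coeffs J x k) \<le> sqrt (\<Sum>\<^sub>\<infinity>k\<in>-J. 1 / (w k)\<^sup>2)" .
qed

section \<open>Lower bounds for \<open>\<B>, \<M> \<rightarrow> F\<^sub>d(v)\<close>\<close>

lemma residual_F_bounded:
  assumes sv: "(\<lambda>k. (v k)\<^sup>2) summable_on UNIV" and dom: "\<And>x k. x \<in> X \<Longrightarrow> cmod (x k) \<le> nX x"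
    and A: "bounded_lin_op X nX (F_set v) (F_norm v) A"
  shows "\<And>x. x \<in> X \<Longrightarrow> (\<lambda>k. (v k)\<^sup>2 * (cmod (x k - A x k))\<^sup>2) summable_on UNIV"
    and "\<exists>B. \<forall>x\<in>X. nX x \<le> 1 \<longrightarrow> F_norm v (\<lambda>k. x k - A x k) \<le> B"
proof -
  obtain C where C: "\<forall>x\<in>X. F_norm v (A x) \<le> C * nX x" and AX: "\<forall>x\<in>X. A x \<in> F_set v"
    using A unfolding bounded_lin_op_def by blast
  have sx: "(\<lambda>k. (v k)\<^sup>2 * (cmod (x k))\<^sup>2) summable_on UNIV" if "x \<in> X" for x
    by (rule weighted_sq_summable_bounded(1)[OF sv dom[OF that]])
  have sAx: "(\<lambda>k. (v k)\<^sup>2 * (cmod (A x k))\<^sup>2) summable_on UNIV" if "x \<in> X" for x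
    using AX that unfolding F_set_def by blast
  show "(\<lambda>k. (v k)\<^sup>2 * (cmod (x k - A x k))\<^sup>2) summable_on UNIV" if "x \<in> X" for x
    by (rule F_norm_diff_le(1)[OF sx[OF that] sAx[OF that]])
  have "F_norm v (\<lambda>k. x k - A x k) \<le> 2 * (sqrt (\<Sum>\<^sub>\<infinity>k. (v k)\<^sup>2) + \<bar>C\<bar>)"
    if x: "x \<in> X" "nX x \<le> 1" for x
  proof -
    have "0 \<le> nX x" using dom[OF x(1), of undefined] norm_ge_zero order_trans by blast
    have "F_norm v x \<le> nX x * sqrt (\<Sum>\<^sub>\<infinity>k. (v k)\<^sup>2)" by (rule F_norm_le_sup_coeff[OF sv dom[OF x(1)]])
    also have "\<dots> \<le> sqrt (\<Sum>\<^sub>\<infinity>k. (v k)\<^sup>2)" using x(2) \<open>0 \<le> nX x\<close> by (intro mult_left_le_one_le) (auto simp: infsum_nonneg)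
    finally have "F_norm v x \<le> sqrt (\<Sum>\<^sub>\<infinity>k. (v k)\<^sup>2)" .
    moreover have "F_norm v (A x) \<le> \<bar>C\<bar>"
      using C x \<open>0 \<le> nX x\<close> mult_mono[of C "\<bar>C\<bar>" "nX x" 1] by force
    ultimately have "F_norm v x + F_norm v (A x) \<le> sqrt (\<Sum>\<^sub>\<infinity>k. (v k)\<^sup>2) + \<bar>C\<bar>"
      by (rule add_mono)
    then show ?thesis
      using F_norm_diff_le(2)[OF sx[OF x(1)] sAx[OF x(1)]] by simp
  qed
  then show "\<exists>B. \<forall>x\<in>X. nX x \<le> 1 \<longrightarrow> F_norm v (\<lambda>k. x k - A x k) \<le> B" by blast
qed

lemma exists_dirac_far_from_range:
  fixes v :: "int^'d::finite \<Rightarrow> real"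
  assumes rank: "rank_less X A (Suc (card J))" and dirac: "\<And>t. t \<in> torus \<Longrightarrow> dirac_coeffs t \<in> X"
    and fin: "finite Q" and JQ: "J \<subseteq> Q" and top: "\<And>k k'. k \<in> J \<Longrightarrow> k' \<in> Q - J \<Longrightarrow> (v k')\<^sup>2 \<le> (v k)\<^sup>2"
  shows "\<exists>t\<in>torus. (\<Sum>k\<in>Q. (v k)\<^sup>2) - (\<Sum>k\<in>J. (v k)\<^sup>2)
           \<le> (\<Sum>k\<in>Q. (v k)\<^sup>2 * (cmod (dirac_coeffs t k - A (dirac_coeffs t) k))\<^sup>2)"
proof -
  obtain m ys where m: "m \<le> card J" and "\<forall>x\<in>X. \<exists>a. A x = (\<lambda>k. \<Sum>j<m. a j * ys j k)"
    using rank unfolding rank_less_def less_Suc_eq_le by blast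
  then obtain \<alpha> where \<alpha>: "\<And>x. x \<in> X \<Longrightarrow> A x = (\<lambda>k. \<Sum>j<m. \<alpha> x j * ys j k)"
    by metis
  obtain M z where M: "M > 0" and inj: "inj_on (\<lambda>k. int_dot z k mod int M) Q"
    using exists_int_dot_mod_inj_on[OF fin] by blast
  define x where "x l = dirac_coeffs (grid_point M z l)" for l
  have xX: "x l \<in> X" for l unfolding x_def by (rule dirac[OF grid_point_in_torus[OF M]])
  have "(\<lambda>l k. cnj (complex_of_real (v k) * unit_root M (int l * int_dot z k)))
      = (\<lambda>l k. complex_of_real (v k) * x l k)"
    unfolding x_def dirac_coeffs_grid_point[OF M] by simp
  then have diag: "outer_sum_diag Q M (\<lambda>l k. complex_of_real (v k) * x l k) (\<lambda>k. (v k)\<^sup>2)"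
    using outer_sum_diag_cnj[OF outer_sum_diag_unit_root[OF M inj, of v]] by (simp only:)
  obtain l where "(\<Sum>k\<in>Q. (v k)\<^sup>2) - (\<Sum>k\<in>J. (v k)\<^sup>2) \<le> sqnorm_on Q
      (\<lambda>k. complex_of_real (v k) * x l k - (\<Sum>j<m. \<alpha> (x l) j * (complex_of_real (v k) * ys j k)))"
    using exists_far_from_span[OF fin JQ m M diag _ top, of "\<lambda>l. \<alpha> (x l)"
        "\<lambda>j k. complex_of_real (v k) * ys j k"] by auto
  also have "\<dots> = (\<Sum>k\<in>Q. (v k)\<^sup>2 * (cmod (x l k - A (x l) k))\<^sup>2)"
  proof -
    have "complex_of_real (v k) * x l k - (\<Sum>j<m. \<alpha> (x l) j * (complex_of_real (v k) * ys j k))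
        = complex_of_real (v k) * (x l k - A (x l) k)" for k
      by (simp add: \<alpha>[OF xX] sum_distrib_left algebra_simps)
    then show ?thesis unfolding sqnorm_on_def by (simp add: norm_mult power_mult_distrib)
  qed
  finally show ?thesis using grid_point_in_torus[OF M] unfolding x_def by blast
qed

lemma approx_lower_bound_F:
  fixes v :: "int^'d::finite \<Rightarrow> real"
  assumes sv: "(\<lambda>k. (v k)\<^sup>2) summable_on UNIV" and dom: "\<And>x k. x \<in> X \<Longrightarrow> cmod (x k) \<le> nX x"
    and dirac: "\<And>t. t \<in> torus \<Longrightarrow> dirac_coeffs t \<in> X \<and> nX (dirac_coeffs t) \<le> 1"
    and finJ: "finite J" and top: "\<forall>k\<in>J. \<forall>k'. k' \<notin> J \<longrightarrow> (v k')\<^sup>2 \<le> (v k)\<^sup>2"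
    and A: "bounded_lin_op X nX (F_set v) (F_norm v) A" and rank: "rank_less X A (Suc (card J))"
  shows "sqrt (\<Sum>\<^sub>\<infinity>k\<in>-J. (v k)\<^sup>2) \<le> op_norm X nX (F_norm v) (\<lambda>x k. x k - A x k)"
    (is "_ \<le> ?op")
proof -
  obtain B where B: "\<forall>x\<in>X. nX x \<le> 1 \<longrightarrow> F_norm v (\<lambda>k. x k - A x k) \<le> B"
    using residual_F_bounded(2)[OF sv dom A] by blast
  have le_op: "F_norm v (\<lambda>k. x k - A x k) \<le> ?op" if "x \<in> X" "nX x \<le> 1" for x
    by (rule le_op_norm[where T = "\<lambda>x k. x k - A x k"]) (use that B in auto)
  have "0 \<in> torus" unfolding torus_def by simp
  then have "0 \<le> ?op" using le_op dirac F_norm_nonneg order_trans by meson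
  have "(\<Sum>\<^sub>\<infinity>k\<in>-J. (v k)\<^sup>2) \<le> ?op\<^sup>2"
  proof (rule infsum_compl_le[OF sv _ finJ])
    fix Q assume Q: "finite Q" "J \<subseteq> Q"
    then obtain t where t: "t \<in> torus" and far: "(\<Sum>k\<in>Q. (v k)\<^sup>2) - (\<Sum>k\<in>J. (v k)\<^sup>2)
        \<le> (\<Sum>k\<in>Q. (v k)\<^sup>2 * (cmod (dirac_coeffs t k - A (dirac_coeffs t) k))\<^sup>2)"
      using exists_dirac_far_from_range[OF rank _ Q] dirac top by blast
    note x = dirac[OF t]
    have "(\<Sum>k\<in>Q. (v k)\<^sup>2 * (cmod (dirac_coeffs t k - A (dirac_coeffs t) k))\<^sup>2)
        \<le> (F_norm v (\<lambda>k. dirac_coeffs t k - A (dirac_coeffs t) k))\<^sup>2"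
      unfolding F_norm_sq using residual_F_bounded(1)[OF sv dom A] x Q(1)
      by (intro finite_sum_le_infsum) auto
    also have "\<dots> \<le> ?op\<^sup>2" using le_op x F_norm_nonneg by (intro power_mono) auto
    finally show "(\<Sum>k\<in>Q. (v k)\<^sup>2) - (\<Sum>k\<in>J. (v k)\<^sup>2) \<le> ?op\<^sup>2" using far by linarith
  qed simp
  then show ?thesis using \<open>0 \<le> ?op\<close> real_le_lsqrt by blast
qed

section \<open>Lower bound for \<open>F\<^sub>d(w) \<rightarrow> \<A>\<close>\<close>

definition delta_coeffs :: "int^'d::finite \<Rightarrow> 'd coeffs" where
  "delta_coeffs k = (\<lambda>k'. if k' = k then 1 else 0)"

lemma sum_delta_coeffs: "finite Q \<Longrightarrow> (\<Sum>k\<in>Q. c k * delta_coeffs k k') = (if k' \<in> Q then c k' else 0)"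
  unfolding delta_coeffs_def by (simp add: if_distrib[of "\<lambda>t. _ * t"] cong: if_cong)

lemma bounded_lin_op_sum_delta_coeffs:
  assumes A: "bounded_lin_op X nX Y nY A" and fsX: "\<And>x. finite {k. x k \<noteq> 0} \<Longrightarrow> x \<in> X"
    and "finite Q"
  shows "A (\<lambda>k'. \<Sum>k\<in>Q. c k * delta_coeffs k k') = (\<lambda>k'. \<Sum>k\<in>Q. c k * A (delta_coeffs k) k')"
  using \<open>finite Q\<close>
proof (induction Q rule: finite_induct)
  have add: "A (\<lambda>k. x k + y k) = (\<lambda>k. A x k + A y k)" if "x \<in> X" "y \<in> X" for x y
    using A that unfolding bounded_lin_op_def by blast
  have scale: "A (\<lambda>k. a * x k) = (\<lambda>k. a * A x k)" if "x \<in> X" for a x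
    using A that unfolding bounded_lin_op_def by blast
  have delta_X: "(\<lambda>k'. a * delta_coeffs k k') \<in> X" for a k
    by (rule fsX, rule finite_subset[of _ "{k}"]) (auto simp: delta_coeffs_def)
  {
    case empty
    show ?case using scale[of "\<lambda>_. 0" 0] fsX[of "\<lambda>_. 0"] by simp
  next
    case (insert q Q)
    have yX: "(\<lambda>k'. \<Sum>k\<in>Q. c k * delta_coeffs k k') \<in> X"
      by (intro fsX finite_subset[OF _ insert(1)]) (auto simp: sum_delta_coeffs[OF insert(1)])
    have "delta_coeffs q \<in> X" using delta_X[of 1 q] by simp
    have "A (\<lambda>k'. \<Sum>k\<in>insert q Q. c k * delta_coeffs k k')
        = A (\<lambda>k'. c q * delta_coeffs q k' + (\<Sum>k\<in>Q. c k * delta_coeffs k k'))"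
      using insert(1,2) by simp
    also have "\<dots> = (\<lambda>k'. c q * A (delta_coeffs q) k' + (\<Sum>k\<in>Q. c k * A (delta_coeffs k) k'))"
      using add[OF delta_X yX] scale[OF \<open>delta_coeffs q \<in> X\<close>] insert(3) by simp
    finally show ?case using insert(1,2) by simp
  }
qed

lemma F_norm_sq_finite_support:
  assumes "finite Q" "\<And>k. k \<notin> Q \<Longrightarrow> x k = 0"
  shows "(F_norm v x)\<^sup>2 = (\<Sum>k\<in>Q. (v k)\<^sup>2 * (cmod (x k))\<^sup>2)"
proof -
  have "(\<Sum>\<^sub>\<infinity>k. (v k)\<^sup>2 * (cmod (x k))\<^sup>2) = (\<Sum>\<^sub>\<infinity>k\<in>Q. (v k)\<^sup>2 * (cmod (x k))\<^sup>2)"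
    using assms(2) by (intro infsum_cong_neutral) auto
  then show ?thesis using assms(1) by (simp add: F_norm_sq)
qed

lemma exists_F_unit_pairing:
  fixes w :: "int^'d::finite \<Rightarrow> real" and g :: "'d coeffs"
  assumes wpos: "\<And>k. w k > 0" and fin: "finite Q"
  shows "\<exists>c. F_norm w (\<lambda>k. if k \<in> Q then c k else 0) \<le> 1 \<and>
           (\<Sum>k\<in>Q. c k * g k) = complex_of_real (sqrt (\<Sum>k\<in>Q. (1 / w k)\<^sup>2 * (cmod (g k))\<^sup>2))"
proof (cases "(\<Sum>k\<in>Q. (1 / w k)\<^sup>2 * (cmod (g k))\<^sup>2) = 0")
  case True
  then show ?thesis by (intro exI[of _ "\<lambda>_. 0"]) (simp add: F_norm_def)
next
  case False
  define S where "S = sqrt (\<Sum>k\<in>Q. (1 / w k)\<^sup>2 * (cmod (g k))\<^sup>2)"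
  have "(\<Sum>k\<in>Q. (1 / w k)\<^sup>2 * (cmod (g k))\<^sup>2) \<ge> 0" by (simp add: sum_nonneg)
  then have S: "S > 0" "S * S = (\<Sum>k\<in>Q. (1 / w k)\<^sup>2 * (cmod (g k))\<^sup>2)"
    using False unfolding S_def by auto
  define c where "c k = cnj (g k) / complex_of_real ((w k)\<^sup>2 * S)" for k
  have w: "w k \<noteq> 0" for k using wpos[of k] by simp
  have cg: "c k * g k = complex_of_real ((1 / w k)\<^sup>2 * (cmod (g k))\<^sup>2 / S)" for k
  proof -
    have "cnj (g k) * g k = complex_of_real ((cmod (g k))\<^sup>2)"
      by (metis complex_norm_square mult.commute)
    then show ?thesis unfolding c_def using w[of k] by (simp add: field_simps)
  qed
  have "(F_norm w (\<lambda>k. if k \<in> Q then c k else 0))\<^sup>2 = (\<Sum>k\<in>Q. (w k)\<^sup>2 * (cmod (c k))\<^sup>2)"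
    using fin by (subst F_norm_sq_finite_support[of Q]) auto
  also have "\<dots> = (\<Sum>k\<in>Q. (1 / w k)\<^sup>2 * (cmod (g k))\<^sup>2 / (S * S))"
  proof (rule sum.cong[OF refl])
    fix k
    have "cmod (c k) = cmod (g k) / ((w k)\<^sup>2 * S)"
      unfolding c_def norm_divide norm_of_real using S(1) by simp
    then show "(w k)\<^sup>2 * (cmod (c k))\<^sup>2 = (1 / w k)\<^sup>2 * (cmod (g k))\<^sup>2 / (S * S)"
      using w[of k] by (simp add: field_simps power2_eq_square)
  qed
  also have "\<dots> = 1" using S False by (simp add: sum_divide_distrib[symmetric])
  finally have "(F_norm w (\<lambda>k. if k \<in> Q then c k else 0))\<^sup>2 \<le> 1\<^sup>2" by simp
  then have "F_norm w (\<lambda>k. if k \<in> Q then c k else 0) \<le> 1" by (rule power2_le_imp_le) simp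
  moreover have "(\<Sum>k\<in>Q. c k * g k) = complex_of_real S"
    unfolding cg of_real_sum[symmetric] sum_divide_distrib[symmetric] S(2)[symmetric]
    using S(1) by simp
  ultimately show ?thesis unfolding S_def by blast
qed

lemma residual_A_bounded:
  fixes w :: "int^'d::finite \<Rightarrow> real"
  assumes wpos: "\<And>k. w k > 0" and sw: "(\<lambda>k. 1 / (w k)\<^sup>2) summable_on UNIV"
    and A: "bounded_lin_op (F_set w) (F_norm w) A_set A_norm A"
  shows "\<And>x. x \<in> F_set w \<Longrightarrow> (\<lambda>k. cmod (x k - A x k)) summable_on UNIV"
    and "\<exists>B. \<forall>x\<in>F_set w. F_norm w x \<le> 1 \<longrightarrow> A_norm (\<lambda>k. x k - A x k) \<le> B"
proof -
  obtain C where C: "\<forall>x\<in>F_set w. A_norm (A x) \<le> C * F_norm w x"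
    and AX: "\<forall>x\<in>F_set w. A x \<in> A_set"
    using A unfolding bounded_lin_op_def by blast
  have l1: "(\<lambda>k. cmod (x k)) summable_on UNIV"
    and A_le: "A_norm x \<le> sqrt (\<Sum>\<^sub>\<infinity>k. 1 / (w k)\<^sup>2) * F_norm w x" if "x \<in> F_set w" for x
    using A_norm_le_F_norm[OF wpos sw _ , of x UNIV] that unfolding F_set_def A_norm_def by auto
  have l1A: "(\<lambda>k. cmod (A x k)) summable_on UNIV" if "x \<in> F_set w" for x
    using AX that unfolding A_set_def by blast
  show "(\<lambda>k. cmod (x k - A x k)) summable_on UNIV" if "x \<in> F_set w" for x
    by (rule A_norm_diff_le(1)[OF l1[OF that] l1A[OF that]])
  have "A_norm (\<lambda>k. x k - A x k) \<le> sqrt (\<Sum>\<^sub>\<infinity>k. 1 / (w k)\<^sup>2) + \<bar>C\<bar>"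
    if x: "x \<in> F_set w" "F_norm w x \<le> 1" for x
  proof -
    have "A_norm x \<le> sqrt (\<Sum>\<^sub>\<infinity>k. 1 / (w k)\<^sup>2)"
      using A_le[OF x(1)] mult_left_le[OF x(2), of "sqrt (\<Sum>\<^sub>\<infinity>k. 1 / (w k)\<^sup>2)"]
      by (simp add: infsum_nonneg)
    moreover have "A_norm (A x) \<le> \<bar>C\<bar>"
      using C x F_norm_nonneg[of w x] mult_mono[of C "\<bar>C\<bar>" "F_norm w x" 1] by force
    ultimately show ?thesis using A_norm_diff_le(2)[OF l1[OF x(1)] l1A[OF x(1)]] by simp
  qed
  then show "\<exists>B. \<forall>x\<in>F_set w. F_norm w x \<le> 1 \<longrightarrow> A_norm (\<lambda>k. x k - A x k) \<le> B" by blast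
qed

lemma sum_residual_mult_sum_delta_coeffs:
  assumes A: "bounded_lin_op X nX Y nY A" and fsX: "\<And>x. finite {k. x k \<noteq> 0} \<Longrightarrow> x \<in> X"
    and fin: "finite Q" and x: "x = (\<lambda>k'. \<Sum>k\<in>Q. c k * delta_coeffs k k')"
  shows "(\<Sum>k'\<in>Q. (x k' - A x k') * e k')
       = (\<Sum>k\<in>Q. c k * (e k - (\<Sum>k'\<in>Q. A (delta_coeffs k) k' * e k')))"
proof -
  have "(\<Sum>k'\<in>Q. A x k' * e k') = (\<Sum>k'\<in>Q. \<Sum>k\<in>Q. c k * (A (delta_coeffs k) k' * e k'))"
    using bounded_lin_op_sum_delta_coeffs[OF A fsX fin, of c] unfolding x[symmetric]
    by (simp add: sum_distrib_right mult.assoc)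
  also have "\<dots> = (\<Sum>k\<in>Q. c k * (\<Sum>k'\<in>Q. A (delta_coeffs k) k' * e k'))"
    by (subst sum.swap) (simp add: sum_distrib_left)
  finally have Ax: "(\<Sum>k'\<in>Q. A x k' * e k') = (\<Sum>k\<in>Q. c k * (\<Sum>k'\<in>Q. A (delta_coeffs k) k' * e k'))" .
  have "(\<Sum>k'\<in>Q. x k' * e k') = (\<Sum>k\<in>Q. c k * e k)"
    unfolding x using fin by (intro sum.cong) (auto simp: sum_delta_coeffs)
  then have "(\<Sum>k'\<in>Q. (x k' - A x k') * e k')
      = (\<Sum>k\<in>Q. c k * e k) - (\<Sum>k\<in>Q. c k * (\<Sum>k'\<in>Q. A (delta_coeffs k) k' * e k'))"
    unfolding Ax[symmetric] by (simp only: left_diff_distrib sum_subtractf)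
  also have "\<dots> = (\<Sum>k\<in>Q. c k * (e k - (\<Sum>k'\<in>Q. A (delta_coeffs k) k' * e k')))"
    by (simp only: right_diff_distrib sum_subtractf)
  finally show ?thesis .
qed

text \<open>Dual to \<open>exists_dirac_far_from_range\<close>: the averaging step is applied to the rows
  \<open>k \<mapsto> A(\<delta>\<^sub>k)\<close> restricted to \<open>Q\<close>.\<close>

lemma exists_unit_root_far_from_rows:
  fixes w :: "int^'d::finite \<Rightarrow> real"
  assumes wpos: "\<And>k. w k > 0" and rank: "rank_less (F_set w) A (Suc (card J))"
    and fin: "finite Q" and JQ: "J \<subseteq> Q"
    and top: "\<And>k k'. k \<in> J \<Longrightarrow> k' \<in> Q - J \<Longrightarrow> (1 / w k')\<^sup>2 \<le> (1 / w k)\<^sup>2"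
  shows "\<exists>e. (\<forall>k. cmod (e k) = 1) \<and> (\<Sum>k\<in>Q. (1 / w k)\<^sup>2) - (\<Sum>k\<in>J. (1 / w k)\<^sup>2)
           \<le> (\<Sum>k\<in>Q. (1 / w k)\<^sup>2 * (cmod (e k - (\<Sum>k'\<in>Q. A (delta_coeffs k) k' * e k')))\<^sup>2)"
proof -
  obtain m ys where m: "m \<le> card J" and "\<forall>x\<in>F_set w. \<exists>a. A x = (\<lambda>k. \<Sum>j<m. a j * ys j k)"
    using rank unfolding rank_less_def less_Suc_eq_le by blast
  then obtain \<alpha> where \<alpha>: "\<And>x. x \<in> F_set w \<Longrightarrow> A x = (\<lambda>k. \<Sum>j<m. \<alpha> x j * ys j k)"
    by metis
  obtain M z where M: "M > 0" and inj: "inj_on (\<lambda>k. int_dot z k mod int M) Q"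
    using exists_int_dot_mod_inj_on[OF fin] by blast
  define e where "e l k = unit_root M (int l * int_dot z k)" for l k
  have diag: "outer_sum_diag Q M (\<lambda>l k. complex_of_real (1 / w k) * e l k) (\<lambda>k. (1 / w k)\<^sup>2)"
    unfolding e_def by (rule outer_sum_diag_unit_root[OF M inj])
  obtain l where "(\<Sum>k\<in>Q. (1 / w k)\<^sup>2) - (\<Sum>k\<in>J. (1 / w k)\<^sup>2) \<le> sqnorm_on Q
      (\<lambda>k. complex_of_real (1 / w k) * e l k - (\<Sum>j<m. (\<Sum>k'\<in>Q. ys j k' * e l k') *
         (complex_of_real (1 / w k) * \<alpha> (delta_coeffs k) j)))"
    using exists_far_from_span[OF fin JQ m M diag _ top, of "\<lambda>l j. \<Sum>k'\<in>Q. ys j k' * e l k'"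
        "\<lambda>j k. complex_of_real (1 / w k) * \<alpha> (delta_coeffs k) j"] by auto
  also have "\<dots> = (\<Sum>k\<in>Q. (1 / w k)\<^sup>2 * (cmod (e l k - (\<Sum>k'\<in>Q. A (delta_coeffs k) k' * e l k')))\<^sup>2)"
  proof -
    have "delta_coeffs k \<in> F_set w" for k by (rule finite_support_in_F_set) (simp add: delta_coeffs_def)
    have "(\<Sum>j<m. (\<Sum>k'\<in>Q. ys j k' * e l k') * (complex_of_real (1 / w k) * \<alpha> (delta_coeffs k) j))
        = complex_of_real (1 / w k) * (\<Sum>k'\<in>Q. (\<Sum>j<m. \<alpha> (delta_coeffs k) j * ys j k') * e l k')" for k
      by (simp add: sum_distrib_left sum_distrib_right sum.swap[of _ "{..<m}"] mult_ac)
    also have "\<dots> k = complex_of_real (1 / w k) * (\<Sum>k'\<in>Q. A (delta_coeffs k) k' * e l k')" for k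
      using \<alpha>[OF \<open>delta_coeffs k \<in> F_set w\<close>] by simp
    finally have "complex_of_real (1 / w k) * e l k - (\<Sum>j<m. (\<Sum>k'\<in>Q. ys j k' * e l k') *
        (complex_of_real (1 / w k) * \<alpha> (delta_coeffs k) j))
        = complex_of_real (1 / w k) * (e l k - (\<Sum>k'\<in>Q. A (delta_coeffs k) k' * e l k'))" for k
      by (simp add: right_diff_distrib)
    then show ?thesis
      unfolding sqnorm_on_def using wpos by (simp add: norm_divide power_divide abs_of_pos)
  qed
  finally show ?thesis by (intro exI[of _ "e l"]) (simp add: e_def)
qed

lemma exists_F_unit_far_from_range:
  fixes w :: "int^'d::finite \<Rightarrow> real"
  assumes wpos: "\<And>k. w k > 0" and A: "bounded_lin_op (F_set w) (F_norm w) A_set A_norm A"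
    and rank: "rank_less (F_set w) A (Suc (card J))"
    and fin: "finite Q" and JQ: "J \<subseteq> Q"
    and top: "\<And>k k'. k \<in> J \<Longrightarrow> k' \<in> Q - J \<Longrightarrow> (1 / w k')\<^sup>2 \<le> (1 / w k)\<^sup>2"
  shows "\<exists>x\<in>F_set w. F_norm w x \<le> 1 \<and>
           sqrt ((\<Sum>k\<in>Q. (1 / w k)\<^sup>2) - (\<Sum>k\<in>J. (1 / w k)\<^sup>2)) \<le> (\<Sum>k\<in>Q. cmod (x k - A x k))"
proof -
  obtain e where e: "\<And>k. cmod (e k) = 1" and far: "(\<Sum>k\<in>Q. (1 / w k)\<^sup>2) - (\<Sum>k\<in>J. (1 / w k)\<^sup>2)
      \<le> (\<Sum>k\<in>Q. (1 / w k)\<^sup>2 * (cmod (e k - (\<Sum>k'\<in>Q. A (delta_coeffs k) k' * e k')))\<^sup>2)"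
    using exists_unit_root_far_from_rows[OF wpos rank fin JQ top] by blast
  define g where "g k = e k - (\<Sum>k'\<in>Q. A (delta_coeffs k) k' * e k')" for k
  obtain c where c: "F_norm w (\<lambda>k. if k \<in> Q then c k else 0) \<le> 1"
    and pair: "(\<Sum>k\<in>Q. c k * g k) = complex_of_real (sqrt (\<Sum>k\<in>Q. (1 / w k)\<^sup>2 * (cmod (g k))\<^sup>2))"
    using exists_F_unit_pairing[where w = w and g = g, OF wpos fin] by blast
  define x where "x = (\<lambda>k'. \<Sum>k\<in>Q. c k * delta_coeffs k k')"
  have x: "x = (\<lambda>k. if k \<in> Q then c k else 0)" unfolding x_def by (simp add: sum_delta_coeffs[OF fin])
  have xF: "x \<in> F_set w" unfolding x by (rule finite_support_in_F_set, rule finite_subset[OF _ fin]) auto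
  have "(\<Sum>k'\<in>Q. (x k' - A x k') * e k') = (\<Sum>k\<in>Q. c k * g k)"
    unfolding g_def by (rule sum_residual_mult_sum_delta_coeffs[OF A _ fin x_def]) (rule finite_support_in_F_set)
  then have "sqrt (\<Sum>k\<in>Q. (1 / w k)\<^sup>2 * (cmod (g k))\<^sup>2) = cmod (\<Sum>k'\<in>Q. (x k' - A x k') * e k')"
    using pair by (simp add: sum_nonneg)
  also have "\<dots> \<le> (\<Sum>k\<in>Q. cmod (x k - A x k))"
    using norm_sum[of "\<lambda>k'. (x k' - A x k') * e k'" Q] by (simp add: e norm_mult)
  finally have "sqrt (\<Sum>k\<in>Q. (1 / w k)\<^sup>2 * (cmod (g k))\<^sup>2) \<le> (\<Sum>k\<in>Q. cmod (x k - A x k))" .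
  moreover have "sqrt ((\<Sum>k\<in>Q. (1 / w k)\<^sup>2) - (\<Sum>k\<in>J. (1 / w k)\<^sup>2))
      \<le> sqrt (\<Sum>k\<in>Q. (1 / w k)\<^sup>2 * (cmod (g k))\<^sup>2)"
    using far unfolding g_def by (rule real_sqrt_le_mono)
  moreover have "F_norm w x \<le> 1" using c unfolding x .
  ultimately show ?thesis using xF by (intro bexI[of _ x] conjI) linarith+
qed

lemma approx_lower_bound_A:
  fixes w :: "int^'d::finite \<Rightarrow> real"
  assumes wpos: "\<And>k. w k > 0" and sw: "(\<lambda>k. 1 / (w k)\<^sup>2) summable_on UNIV"
    and finJ: "finite J" and top: "\<forall>k\<in>J. \<forall>k'. k' \<notin> J \<longrightarrow> (1 / w k')\<^sup>2 \<le> (1 / w k)\<^sup>2"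
    and A: "bounded_lin_op (F_set w) (F_norm w) A_set A_norm A"
    and rank: "rank_less (F_set w) A (Suc (card J))"
  shows "sqrt (\<Sum>\<^sub>\<infinity>k\<in>-J. (1 / w k)\<^sup>2) \<le> op_norm (F_set w) (F_norm w) A_norm (\<lambda>x k. x k - A x k)"
    (is "_ \<le> ?op")
proof -
  obtain B where B: "\<forall>x\<in>F_set w. F_norm w x \<le> 1 \<longrightarrow> A_norm (\<lambda>k. x k - A x k) \<le> B"
    using residual_A_bounded(2)[OF wpos sw A] by blast
  have le_op: "A_norm (\<lambda>k. x k - A x k) \<le> ?op" if "x \<in> F_set w" "F_norm w x \<le> 1" for x
    by (rule le_op_norm[where T = "\<lambda>x k. x k - A x k"]) (use that B in auto)
  have "(\<lambda>_. 0) \<in> F_set w" "F_norm w (\<lambda>_. 0) \<le> 1"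
    by (auto intro: finite_support_in_F_set simp: F_norm_def)
  then have "0 \<le> ?op" using le_op A_norm_nonneg order_trans by meson
  have sw': "(\<lambda>k. (1 / w k)\<^sup>2) summable_on UNIV" using sw by (simp add: power_divide)
  have "(\<Sum>\<^sub>\<infinity>k\<in>-J. (1 / w k)\<^sup>2) \<le> ?op\<^sup>2"
  proof (rule infsum_compl_le[OF sw' _ finJ])
    fix Q assume Q: "finite Q" "J \<subseteq> Q"
    then obtain x where x: "x \<in> F_set w" "F_norm w x \<le> 1"
      and far: "sqrt ((\<Sum>k\<in>Q. (1 / w k)\<^sup>2) - (\<Sum>k\<in>J. (1 / w k)\<^sup>2)) \<le> (\<Sum>k\<in>Q. cmod (x k - A x k))"
      using exists_F_unit_far_from_range[OF wpos A rank Q] top by blast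
    have "(\<Sum>k\<in>Q. cmod (x k - A x k)) \<le> A_norm (\<lambda>k. x k - A x k)"
      unfolding A_norm_def using residual_A_bounded(1)[OF wpos sw A x(1)] Q(1)
      by (intro finite_sum_le_infsum) auto
    also have "\<dots> \<le> ?op" by (rule le_op[OF x])
    finally have "sqrt ((\<Sum>k\<in>Q. (1 / w k)\<^sup>2) - (\<Sum>k\<in>J. (1 / w k)\<^sup>2)) \<le> ?op" using far by linarith
    then show "(\<Sum>k\<in>Q. (1 / w k)\<^sup>2) - (\<Sum>k\<in>J. (1 / w k)\<^sup>2) \<le> ?op\<^sup>2"
      using \<open>0 \<le> ?op\<close> real_sqrt_le_iff sqrt_le_D by blast
  qed simp
  then show ?thesis using \<open>0 \<le> ?op\<close> real_le_lsqrt by blast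
qed

section \<open>The approximation numbers\<close>

lemma approx_num_eqI:
  assumes lower: "\<And>A. bounded_lin_op X nX Y nY A \<Longrightarrow> rank_less X A n
                    \<Longrightarrow> c \<le> op_norm X nX nY (\<lambda>x k. x k - A x k)"
    and R: "bounded_lin_op X nX Y nY R" "rank_less X R n" "op_norm X nX nY (\<lambda>x k. x k - R x k) \<le> c"
  shows "approx_num X nX Y nY id n = c"
proof -
  have "c \<le> approx_num X nX Y nY id n"
    unfolding approx_num_def id_def using R by (intro cINF_greatest) (auto intro: lower)
  moreover have "approx_num X nX Y nY id n \<le> op_norm X nX nY (\<lambda>x k. x k - R x k)"
    unfolding approx_num_def id_def using R lower by (intro cINF_lower bdd_belowI[of _ c]) auto
  ultimately show ?thesis using R(3) by linarith
qed

lemma approx_num_F_eq: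
  fixes v :: "int^'d::finite \<Rightarrow> real"
  assumes sv: "(\<lambda>k. (v k)\<^sup>2) summable_on UNIV" and dom: "\<And>x k. x \<in> X \<Longrightarrow> cmod (x k) \<le> nX x"
    and dirac: "\<And>t. t \<in> torus \<Longrightarrow> dirac_coeffs t \<in> X \<and> nX (dirac_coeffs t) \<le> 1"
    and finJ: "finite J" and top: "\<forall>k\<in>J. \<forall>k'. k' \<notin> J \<longrightarrow> (v k')\<^sup>2 \<le> (v k)\<^sup>2"
  shows "approx_num X nX (F_set v) (F_norm v) id (Suc (card J)) = sqrt (\<Sum>\<^sub>\<infinity>k\<in>-J. (v k)\<^sup>2)"
proof (rule approx_num_eqI[where R = "restrict_coeffs J"])
  show "sqrt (\<Sum>\<^sub>\<infinity>k\<in>-J. (v k)\<^sup>2) \<le> op_norm X nX (F_norm v) (\<lambda>x k. x k - A x k)"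
    if "bounded_lin_op X nX (F_set v) (F_norm v) A" "rank_less X A (Suc (card J))" for A
    using approx_lower_bound_F[OF sv dom dirac finJ top that] .
next
  show "bounded_lin_op X nX (F_set v) (F_norm v) (restrict_coeffs J)"
    by (rule bounded_lin_op_restrict_coeffs_F[where v = v, OF sv dom finJ])
  show "rank_less X (restrict_coeffs J) (Suc (card J))" by (rule rank_less_restrict_coeffs[OF finJ])
  have "0 \<in> torus" unfolding torus_def by simp
  then show "op_norm X nX (F_norm v) (\<lambda>x k. x k - restrict_coeffs J x k) \<le> sqrt (\<Sum>\<^sub>\<infinity>k\<in>-J. (v k)\<^sup>2)"
    using dirac by (intro op_norm_restrict_coeffs_F_le[where v = v, OF sv dom]) auto
qed

lemma approx_num_A_eq:
  fixes w :: "int^'d::finite \<Rightarrow> real"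
  assumes wpos: "\<And>k. w k > 0" and sw: "(\<lambda>k. 1 / (w k)\<^sup>2) summable_on UNIV"
    and finJ: "finite J" and top: "\<forall>k\<in>J. \<forall>k'. k' \<notin> J \<longrightarrow> (1 / w k')\<^sup>2 \<le> (1 / w k)\<^sup>2"
  shows "approx_num (F_set w) (F_norm w) A_set A_norm id (Suc (card J)) = sqrt (\<Sum>\<^sub>\<infinity>k\<in>-J. (1 / w k)\<^sup>2)"
proof (rule approx_num_eqI[where R = "restrict_coeffs J"])
  show "sqrt (\<Sum>\<^sub>\<infinity>k\<in>-J. (1 / w k)\<^sup>2) \<le> op_norm (F_set w) (F_norm w) A_norm (\<lambda>x k. x k - A x k)"
    if "bounded_lin_op (F_set w) (F_norm w) A_set A_norm A" "rank_less (F_set w) A (Suc (card J))" for A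
    using approx_lower_bound_A[OF wpos sw finJ top that] .
next
  show "bounded_lin_op (F_set w) (F_norm w) A_set A_norm (restrict_coeffs J)"
    by (rule bounded_lin_op_restrict_coeffs_A[where w = w, OF wpos sw finJ])
  show "rank_less (F_set w) (restrict_coeffs J) (Suc (card J))" by (rule rank_less_restrict_coeffs[OF finJ])
  show "op_norm (F_set w) (F_norm w) A_norm (\<lambda>x k. x k - restrict_coeffs J x k)
      \<le> sqrt (\<Sum>\<^sub>\<infinity>k\<in>-J. (1 / w k)\<^sup>2)"
    using op_norm_restrict_coeffs_A_le[where w = w, OF wpos sw] by (simp add: power_divide)
qed

theorem corollary3:
  fixes w :: "int^'d::finite \<Rightarrow> real" and n :: nat
  assumes "\<And>k. w k > 0"
    and "(\<lambda>k. 1 / (w k)\<^sup>2) summable_on UNIV"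
  shows "approx_num M_set M_norm (F_set (\<lambda>k. 1 / w k)) (F_norm (\<lambda>k. 1 / w k)) id n
           = approx_num B_set B_norm (F_set (\<lambda>k. 1 / w k)) (F_norm (\<lambda>k. 1 / w k)) id n
       \<and> approx_num B_set B_norm (F_set (\<lambda>k. 1 / w k)) (F_norm (\<lambda>k. 1 / w k)) id n
           = approx_num (F_set w) (F_norm w) A_set A_norm id n"
proof (cases n)
  case 0
  \<comment> \<open>no operator has rank \<open>< 0\<close>, so all three sides are the junk value \<open>Inf {}\<close>\<close>
  then show ?thesis by (simp add: approx_num_def rank_less_def)
next
  case (Suc p)
  have sv: "(\<lambda>k. (1 / w k)\<^sup>2) summable_on UNIV" using assms(2) by (simp add: power_divide)
  have "0 < (1 / w k)\<^sup>2" for k using assms(1)[of k] by simp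
  then obtain J where J: "finite J" "card J = p"
    and top: "\<forall>k\<in>J. \<forall>k'. k' \<notin> J \<longrightarrow> (1 / w k')\<^sup>2 \<le> (1 / w k)\<^sup>2"
    using exists_top_set[where s = "\<lambda>k. (1 / w k)\<^sup>2", OF sv _ infinite_UNIV_vec[OF infinite_UNIV_int]]
    by blast
  have n: "n = Suc (card J)" using Suc J(2) by simp
  show ?thesis
    unfolding n
    using approx_num_F_eq[where v = "\<lambda>k. 1 / w k", OF sv M_norm_ge_coeff dirac_coeffs_in_M_set J(1) top]
      approx_num_F_eq[where v = "\<lambda>k. 1 / w k", OF sv B_norm_ge_coeff dirac_coeffs_in_B_set J(1) top]
      approx_num_A_eq[OF assms J(1) top]
    by (simp only:)
qed

end
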